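(* Suppose $\boldsymbol{\gamma}\in B(\boldsymbol{\gamma}^*,\epsilon_{n2})$ and $b_n=o\big((n/\log n)^{1/12}\big)$. Then, as $n\to\infty$, with probability at least $1-O(1/n)$ the solution $\widehat{\boldsymbol{\eta}}_\gamma$ of $F(\boldsymbol{\eta},\boldsymbol{\gamma})=0$ (in $\boldsymbol{\eta}$, with $\boldsymbol{\gamma}$ fixed) exists and satisfies \[ \|\widehat{\boldsymbol{\eta}}_\gamma-\boldsymbol{\eta}^*\|_\infty=O_p\Big(b_n^3\sqrt{\tfrac{\log n}{n}}\Big)=o_p(1). \] Moreover, if $\widehat{\boldsymbol{\eta}}_\gamma$ exists, it is unique.
   Context: Model (covariate-$p_0$-model): for $n\ge 2$ nodes labeled $1,\dots,n$, the entries $a_{ij}\in\{0,1\}$, $i\neq j$, of the adjacency matrix are independent Bernoulli random variables ($a_{ii}=0$) with $P(a_{ij}=1)=\mu(\pi_{ij})$, where $\mu(x)=e^x/(1+e^x)$ and $\pi_{ij}=\alpha_i+\beta_j+Z_{ij}^\top\boldsymbol{\gamma}$. The covariates $Z_{ij}\in\mathbb{R}^p$ are observed and treated as fixed, $p$ is fixed, and all entries of all $Z_{ij}$ lie in a fixed compact subset of $\mathbb{R}$; $z_{\max}=\max_{i\neq j}\|Z_{ij}\|_\infty$. For identification $\beta_n=0$, and $\boldsymbol{\eta}=(\alpha_1,\dots,\alpha_n,\beta_1,\dots,\beta_{n-1})^\top\in\mathbb{R}^{2n-1}$, $\boldsymbol{\gamma}\in\mathbb{R}^p$. True parameter values are $(\boldsymbol{\eta}^*,\boldsymbol{\gamma}^*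 )$. Out-degrees $d_i=\sum_{j\neq i}a_{ij}$, in-degrees $b_j=\sum_{i\neq j}a_{ij}$. Define $F(\boldsymbol{\eta},\boldsymbol{\gamma})\in\mathbb{R}^{2n-1}$ by $F_i=\sum_{k\neq i}\mu(\alpha_i+\beta_k+Z_{ik}^\top\boldsymbol{\gamma})-d_i$ for $i=1,\dots,n$, and $F_{n+j}=\sum_{k\neq j}\mu(\alpha_k+\beta_j+Z_{kj}^\top\boldsymbol{\gamma})-b_j$ for $j=1,\dots,n-1$. $B(\mathbf{x},\epsilon)=\{\mathbf{y}:\|\mathbf{x}-\mathbf{y}\|_\infty\le\epsilon\}$. Let $\epsilon_{n1}=o(1)$ and $0<\epsilon_{n2}\le(\log n/n)^{1/2}/(p z_{\max})$ be small positive numbers, and $b_n=\sup_{\boldsymbol{\eta}\in B(\boldsymbol{\eta}^*,\epsilon_{n1}),\,\boldsymbol{\gamma}\in B(\boldsymbol{\gamma}^*,\epsilon_{n2}),\,i\neq j}(1+e^{\pi_{ij}})^2/e^{\pi_{ij}}$ (so $b_n\ge 4$ and may grow with $n$). *)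

theory Defs
  imports "HOL-Analysis.Analysis" "HOL-Probability.Probability" "HOL-Library.Landau_Symbols"
begin

text \<open>The parameter vector eta in R^(2n-1) is a function nat => real, of which only the
  coordinates 1..2n-1 matter: alpha_i = eta i (i = 1..n), beta_j = eta (n+j) (j = 1..n-1),
  beta_n = 0.  Covariates Z i j :: real^'p, gamma :: real^'p.
  An adjacency matrix is a function (nat * nat) => bool; only off-diagonal pairs in
  {1..n} matter.\<close>

definition mu :: "real \<Rightarrow> real" where
  "mu x = exp x / (1 + exp x)"

definition alpha_of :: "(nat \<Rightarrow> real) \<Rightarrow> nat \<Rightarrow> real" where
  "alpha_of eta i = eta i"

definition beta_of :: "nat \<Rightarrow> (nat \<Rightarrow> real) \<Rightarrow> nat \<Rightarrow> real" where
  "beta_of n eta j = (if j = n then 0 else eta (n + j))"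

definition pi_ij :: "nat \<Rightarrow> (nat \<Rightarrow> nat \<Rightarrow> real^'p) \<Rightarrow> (nat \<Rightarrow> real) \<Rightarrow> real^'p \<Rightarrow> nat \<Rightarrow> nat \<Rightarrow> real" where
  "pi_ij n Z eta gam i j = alpha_of eta i + beta_of n eta j + Z i j \<bullet> gam"

definition offdiag :: "nat \<Rightarrow> (nat \<times> nat) set" where
  "offdiag n = {(i, j). i \<in> {1..n} \<and> j \<in> {1..n} \<and> i \<noteq> j}"

definition adj_pmf :: "nat \<Rightarrow> (nat \<Rightarrow> nat \<Rightarrow> real^'p) \<Rightarrow> (nat \<Rightarrow> real) \<Rightarrow> real^'p \<Rightarrow> (nat \<times> nat \<Rightarrow> bool) pmf" where
  "adj_pmf n Z etas gams =
     Pi_pmf (offdiag n) False (\<lambda>(i, j). bernoulli_pmf (mu (pi_ij n Z etas gams i j)))"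

definition outdeg :: "nat \<Rightarrow> (nat \<times> nat \<Rightarrow> bool) \<Rightarrow> nat \<Rightarrow> real" where
  "outdeg n A i = (\<Sum>j \<in> {1..n} - {i}. of_bool (A (i, j)))"

definition indeg :: "nat \<Rightarrow> (nat \<times> nat \<Rightarrow> bool) \<Rightarrow> nat \<Rightarrow> real" where
  "indeg n A j = (\<Sum>i \<in> {1..n} - {j}. of_bool (A (i, j)))"

definition F_fun :: "nat \<Rightarrow> (nat \<Rightarrow> nat \<Rightarrow> real^'p) \<Rightarrow> (nat \<times> nat \<Rightarrow> bool) \<Rightarrow> (nat \<Rightarrow> real) \<Rightarrow> real^'p \<Rightarrow> nat \<Rightarrow> real" where
  "F_fun n Z A eta gam k =
     (if k \<le> n then (\<Sum>j \<in> {1..n} - {k}. mu (pi_ij n Z eta gam k j)) - outdeg n A k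
      else (\<Sum>i \<in> {1..n} - {k - n}. mu (pi_ij n Z eta gam i (k - n))) - indeg n A (k - n))"

definition is_solution :: "nat \<Rightarrow> (nat \<Rightarrow> nat \<Rightarrow> real^'p) \<Rightarrow> (nat \<times> nat \<Rightarrow> bool) \<Rightarrow> real^'p \<Rightarrow> (nat \<Rightarrow> real) \<Rightarrow> bool" where
  "is_solution n Z A gam eta \<longleftrightarrow> (\<forall>k \<in> {1..2*n-1}. F_fun n Z A eta gam k = 0)"

definition eta_dist :: "nat \<Rightarrow> (nat \<Rightarrow> real) \<Rightarrow> (nat \<Rightarrow> real) \<Rightarrow> real" where
  "eta_dist n eta eta' = Max ((\<lambda>k. \<bar>eta k - eta' k\<bar>) ` {1..2*n-1})"

definition z_max :: "nat \<Rightarrow> (nat \<Rightarrow> nat \<Rightarrow> real^'p) \<Rightarrow> real" where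
  "z_max n Z = Max ((\<lambda>(i, j). infnorm (Z i j)) ` offdiag n)"

definition b_n :: "nat \<Rightarrow> (nat \<Rightarrow> nat \<Rightarrow> real^'p) \<Rightarrow> (nat \<Rightarrow> real) \<Rightarrow> real^'p \<Rightarrow> real \<Rightarrow> real \<Rightarrow> real" where
  "b_n n Z etas gams e1 e2 =
     Sup {(1 + exp (pi_ij n Z eta gam i j))^2 / exp (pi_ij n Z eta gam i j) | eta gam i j.
            (\<forall>k \<in> {1..2*n-1}. \<bar>eta k - etas k\<bar> \<le> e1) \<and> infnorm (gam - gams) \<le> e2
            \<and> (i, j) \<in> offdiag n}"

end

(* The degree equations F(eta, gam) = 0 are the critical-point equations of the negative
   log-likelihood of the row and column shifts, which near eta* is strongly convex with modulus
   of order 1/b_n. Minimise it over a box of shifts. Comparing with the value at eta*, strong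
   convexity and the degree residuals (of order (n log n)^(1/2) with probability 1 - O(1/n), by
   Hoeffding and a union bound over the 2n rows and columns) bound the l1 norm of the centred
   minimiser by O(b_n (n log n)^(1/2)). A single row or column equation, whose derivative in its
   own shift is at least (n - 1)/(e^2 b_n), then bounds every coordinate by
   O(b_n^2 (log n / n)^(1/2)). So the recentred minimiser is interior and solves the equations.
   Uniqueness follows from the strict monotonicity of the logistic function. *)

theory Submission
  imports Defs "HOL-Probability.Hoeffding" "HOL-Real_Asymp.Real_Asymp"
begin

definition mu' :: "real \<Rightarrow> real" where
  "mu' x = exp x / (1 + exp x)^2"

lemma one_plus_exp_pos: "0 < 1 + exp (x::real)"
  by (simp add: add_pos_pos)

lemma has_real_derivative_mu: "(mu has_real_derivative mu' x) (at x)"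
  unfolding mu_def mu'_def using one_plus_exp_pos[of x]
  by (auto intro!: derivative_eq_intros simp: field_simps power2_eq_square)

lemma has_real_derivative_ln_one_plus_exp: "((\<lambda>x. ln (1 + exp x)) has_real_derivative mu x) (at x)"
  unfolding mu_def using one_plus_exp_pos[of x]
  by (auto intro!: derivative_eq_intros simp: field_simps)

lemma mu_bounds: "0 \<le> mu x \<and> mu x \<le> 1"
  unfolding mu_def using one_plus_exp_pos[of x] by (auto simp: divide_simps)

lemma mu_minus: "mu (- x) = 1 - mu x"
  unfolding mu_def using one_plus_exp_pos[of x] by (simp add: exp_minus field_simps)

lemma inverse_mu'_eq_ratio: "1 / mu' x = (1 + exp x)^2 / exp x"
  by (simp add: mu'_def)

lemma inverse_mu'_eq: "1 / mu' x = exp (- x) + 2 + exp x"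
  unfolding mu'_def by (simp add: exp_minus field_simps power2_eq_square)

lemma mu'_minus: "mu' (- x) = mu' x"
  unfolding mu'_def by (simp add: exp_minus field_simps power2_eq_square)

lemma mu'_pos: "0 < mu' x"
  unfolding mu'_def using one_plus_exp_pos[of x] by simp

lemma inverse_mu'_ge_4: "4 \<le> 1 / mu' x"
proof -
  have "4 * exp x \<le> (1 + exp x)^2"
    using zero_le_square[of "1 - exp x"] by (simp add: power2_eq_square algebra_simps)
  then show ?thesis unfolding mu'_def by (simp add: pos_le_divide_eq)
qed

lemma mu'_le_quarter: "mu' x \<le> 1 / 4"
  using inverse_mu'_ge_4[of x] mu'_pos[of x] by (simp add: le_divide_eq)

lemma mu'_ge_of_inverse_le:
  assumes "1 / mu' x \<le> b" shows "1 / b \<le> mu' x"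
proof -
  have "0 < 1 / mu' x" "0 < b" using mu'_pos[of x] inverse_mu'_ge_4[of x] assms by auto
  then have "1 / b \<le> 1 / (1 / mu' x)"
    using assms by (intro divide_left_mono) auto
  then show ?thesis by simp
qed

lemma mu'_shift_ge: "exp (- \<bar>w\<bar>) * mu' p \<le> mu' (p + w)"
proof -
  have "exp (- (p + w)) \<le> exp \<bar>w\<bar> * exp (- p)" "exp (p + w) \<le> exp \<bar>w\<bar> * exp p"
    "2 \<le> exp \<bar>w\<bar> * 2"
    unfolding exp_add[symmetric] by auto
  then have "exp (- (p + w)) + 2 + exp (p + w) \<le> exp \<bar>w\<bar> * (exp (- p) + 2 + exp p)"
    unfolding distrib_left by linarith
  then have "1 / mu' (p + w) \<le> exp \<bar>w\<bar> * (1 / mu' p)"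
    unfolding inverse_mu'_eq by simp
  then have "1 / (exp \<bar>w\<bar> * (1 / mu' p)) \<le> 1 / (1 / mu' (p + w))"
    using mu'_pos[of "p + w"] mu'_pos[of p] by (intro divide_left_mono) auto
  then show ?thesis by (simp add: exp_minus field_simps)
qed

lemma mu_strict_mono: "x < y \<Longrightarrow> mu x < mu y"
proof -
  assume "x < y"
  then obtain z where "mu y - mu x = (y - x) * mu' z"
    using MVT2[of x y mu mu'] has_real_derivative_mu by blast
  moreover have "0 < (y - x) * mu' z" using \<open>x < y\<close> mu'_pos[of z] by simp
  ultimately show ?thesis by simp
qed

lemma mu_mono: "x \<le> y \<Longrightarrow> mu x \<le> mu y"
  using mu_strict_mono[of x y] by (cases "x = y") auto

lemma mu_lipschitz: "\<bar>mu x - mu y\<bar> \<le> \<bar>x - y\<bar> / 4"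
proof -
  have *: "mu b - mu a \<le> (b - a) / 4" if ab: "a < b" for a b
  proof -
    obtain z where "mu b - mu a = (b - a) * mu' z"
      using MVT2[OF ab, of mu mu'] has_real_derivative_mu by blast
    then show ?thesis using mu'_le_quarter[of z] ab by (simp add: mult_left_mono)
  qed
  show ?thesis
    using *[of x y] *[of y x] mu_mono[of x y] mu_mono[of y x] by (cases x y rule: linorder_cases) auto
qed

lemma mu_increment_ge:
  assumes "x \<le> y" "\<bar>x\<bar> \<le> r" "\<bar>y\<bar> \<le> r"
  shows "(y - x) * (exp (- r) * mu' p) \<le> mu (p + y) - mu (p + x)"
proof (cases "x = y")
  case False
  with assms have "p + x < p + y" by simp
  then obtain z where z: "p + x < z" "z < p + y" "mu (p + y) - mu (p + x) = (y - x) * mu' z"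
    using MVT2[of "p + x" "p + y" mu mu'] has_real_derivative_mu by auto
  have "exp (- r) * mu' p \<le> exp (- \<bar>z - p\<bar>) * mu' p"
    using z assms mu'_pos[of p] by (intro mult_right_mono) auto
  also have "\<dots> \<le> mu' z" using mu'_shift_ge[of "z - p" p] by simp
  finally show ?thesis using z(3) assms(1) by (simp add: mult_left_mono)
qed simp

lemma ln_one_plus_exp_strongly_convex:
  assumes u: "\<bar>u\<bar> \<le> r"
  shows "u^2 * (exp (- r) * mu' p) / 2 \<le> ln (1 + exp (p + u)) - ln (1 + exp p) - mu p * u"
proof -
  define k where "k = exp (- r) * mu' p"
  define \<phi> where "\<phi> t = ln (1 + exp (p + t)) - ln (1 + exp p) - mu p * t - k * t^2 / 2" for t
  define \<phi>' where "\<phi>' t = mu (p + t) - mu p - k * t" for t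
  have \<phi>_deriv: "(\<phi> has_real_derivative \<phi>' t) (at t)" for t
    unfolding \<phi>_def \<phi>'_def
    by (rule derivative_eq_intros refl DERIV_chain2[OF has_real_derivative_ln_one_plus_exp] | simp)+
  have "\<phi> 0 \<le> \<phi> u"
  proof (cases "0 \<le> u")
    case True
    show ?thesis
    proof (rule deriv_nonneg_imp_mono[OF \<phi>_deriv])
      fix t assume t: "t \<in> {0..u}"
      have "(t - 0) * k \<le> mu (p + t) - mu (p + 0)"
        unfolding k_def using t u by (intro mu_increment_ge) auto
      then show "0 \<le> \<phi>' t" unfolding \<phi>'_def by (simp add: mult.commute)
    qed (use True in auto)
  next
    case False
    have "- \<phi> u \<le> - \<phi> 0"
    proof (rule deriv_nonneg_imp_mono[of u 0 "\<lambda>t. - \<phi> t" "\<lambda>t. - \<phi>' t"])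
      fix t assume t: "t \<in> {u..0}"
      show "((\<lambda>t. - \<phi> t) has_real_derivative - \<phi>' t) (at t)"
        by (rule DERIV_minus[OF \<phi>_deriv])
      have "(0 - t) * k \<le> mu (p + 0) - mu (p + t)"
        unfolding k_def using t u by (intro mu_increment_ge) auto
      then show "0 \<le> - \<phi>' t" unfolding \<phi>'_def by (simp add: algebra_simps)
    qed (use False in auto)
    then show ?thesis by simp
  qed
  then show ?thesis unfolding \<phi>_def k_def by (simp add: mult.commute)
qed

lemma mu_shift_ge:
  assumes m: "0 \<le> m" "m \<le> 1" "m \<le> x"
  shows "m * (exp (- 2) * mu' p) - \<bar>y\<bar> / 2 \<le> mu (p + x + y) - mu p"
proof -
  have "\<bar>mu (p + y) - mu p\<bar> \<le> \<bar>y\<bar> / 4"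
    using mu_lipschitz[of "p + y" p] by simp
  then have lip: "- \<bar>y\<bar> / 4 \<le> mu (p + y) - mu p" by arith
  have "exp (- 2) * mu' p \<le> 1 * (1 / 4)"
    using mu'_le_quarter[of p] mu'_pos[of p] by (intro mult_mono) auto
  then have small: "m * (exp (- 2) * mu' p) \<le> 1 * (1 / 4)"
    using m mu'_pos[of p] by (intro mult_mono) auto
  show ?thesis
  proof (cases "\<bar>y\<bar> \<le> 1")
    case True
    have "(y + m - y) * (exp (- 2) * mu' p) \<le> mu (p + (y + m)) - mu (p + y)"
      using True m by (intro mu_increment_ge) auto
    moreover have "mu (p + (y + m)) \<le> mu (p + x + y)" using m by (intro mu_mono) auto
    ultimately show ?thesis using lip by simp
  next
    case False
    have "mu (p + y) \<le> mu (p + x + y)" using m by (intro mu_mono) auto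
    then show ?thesis using lip small False by simp
  qed
qed

lemma sum_mu_shift_ge:
  assumes J: "\<forall>j\<in>J. 1 / mu' (q j) \<le> b" and m: "0 \<le> m" "m \<le> 1" "m \<le> X"
    and z: "(\<Sum>j\<in>J. \<bar>z j\<bar>) \<le> T"
  shows "m / (exp 2 * b) * card J - T / 2 \<le> (\<Sum>j\<in>J. mu (q j + X + z j) - mu (q j))"
proof (cases "finite J")
  case True
  have "(\<Sum>j\<in>J. m / (exp 2 * b) - \<bar>z j\<bar> / 2) \<le> (\<Sum>j\<in>J. mu (q j + X + z j) - mu (q j))"
  proof (rule sum_mono)
    fix j assume "j \<in> J"
    then have "1 / b \<le> mu' (q j)" using J mu'_ge_of_inverse_le by blast
    then have "m * (exp (- 2) * (1 / b)) \<le> m * (exp (- 2) * mu' (q j))"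
      using m by (intro mult_left_mono) auto
    then have "m / (exp 2 * b) \<le> m * (exp (- 2) * mu' (q j))"
      by (simp add: exp_minus divide_inverse mult.assoc)
    then show "m / (exp 2 * b) - \<bar>z j\<bar> / 2 \<le> mu (q j + X + z j) - mu (q j)"
      using mu_shift_ge[OF m, of "q j" "z j"] by linarith
  qed
  moreover have "(\<Sum>j\<in>J. m / (exp 2 * b) - \<bar>z j\<bar> / 2) = m / (exp 2 * b) * card J - (\<Sum>j\<in>J. \<bar>z j\<bar>) / 2"
    by (simp add: sum_subtractf sum_divide_distrib[symmetric])
  ultimately show ?thesis using z by linarith
qed (use z in simp)

lemma sum_mu_shift_le:
  assumes J: "\<forall>j\<in>J. 1 / mu' (q j) \<le> b" and m: "0 \<le> m" "m \<le> 1" "X \<le> - m"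
    and z: "(\<Sum>j\<in>J. \<bar>z j\<bar>) \<le> T"
  shows "(\<Sum>j\<in>J. mu (q j + X + z j) - mu (q j)) \<le> T / 2 - m / (exp 2 * b) * card J"
proof -
  have "m / (exp 2 * b) * card J - T / 2 \<le> (\<Sum>j\<in>J. mu (- q j + - X + - z j) - mu (- q j))"
    using J m z by (intro sum_mu_shift_ge) (simp_all add: mu'_minus)
  also have "\<dots> = (\<Sum>j\<in>J. - (mu (q j + X + z j) - mu (q j)))"
  proof (rule sum.cong)
    fix j
    show "mu (- q j + - X + - z j) - mu (- q j) = - (mu (q j + X + z j) - mu (q j))"
      using mu_minus[of "q j + X + z j"] mu_minus[of "q j"] by simp
  qed simp
  also have "\<dots> = - (\<Sum>j\<in>J. mu (q j + X + z j) - mu (q j))"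
    by (rule sum_negf)
  finally show ?thesis by simp
qed

lemma sum_mu_shift_sign:
  assumes J: "\<forall>j\<in>J. 1 / mu' (q j) \<le> b" and z: "(\<Sum>j\<in>J. \<bar>z j\<bar>) \<le> T"
    and Y: "\<bar>\<Sum>j\<in>J. mu (q j) - Y j\<bar> \<le> \<delta>"
    and t: "0 \<le> t" "t \<le> 1" "t \<le> \<bar>X\<bar>" and gain: "T / 2 + \<delta> < t / (exp 2 * b) * card J"
  shows "0 < X * (\<Sum>j\<in>J. mu (q j + X + z j) - Y j)"
proof -
  have split: "(\<Sum>j\<in>J. mu (q j + X + z j) - Y j)
      = (\<Sum>j\<in>J. mu (q j + X + z j) - mu (q j)) + (\<Sum>j\<in>J. mu (q j) - Y j)"
    by (simp add: sum_subtractf)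
  have "0 \<le> T" using z sum_nonneg[of J "\<lambda>j. \<bar>z j\<bar>"] by linarith
  moreover have "0 \<le> \<delta>" using Y abs_ge_zero order_trans by blast
  ultimately have "0 < t / (exp 2 * b) * card J" using gain by linarith
  then have "0 < t" using t(1) by (cases "t = 0") auto
  consider "t \<le> X" | "X \<le> - t" using t by linarith
  then show ?thesis
  proof cases
    case 1
    then have "0 < (\<Sum>j\<in>J. mu (q j + X + z j) - Y j)"
      using sum_mu_shift_ge[OF J t(1,2) 1 z] Y gain split by (simp add: abs_le_iff)
    then show ?thesis using 1 \<open>0 < t\<close> by simp
  next
    case 2
    then have "(\<Sum>j\<in>J. mu (q j + X + z j) - Y j) < 0"
      using sum_mu_shift_le[OF J t(1,2) 2 z] Y gain split by (simp add: abs_le_iff)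
    then show ?thesis using 2 \<open>0 < t\<close> by (simp add: zero_less_mult_iff)
  qed
qed

lemma sum_offdiag_swap:
  assumes "finite I"
  shows "(\<Sum>i\<in>I. \<Sum>j\<in>I - {i}. f i j) = (\<Sum>j\<in>I. \<Sum>i\<in>I - {j}. f i j)"
proof -
  have "\<And>i. I - {i} = {j \<in> I. i \<noteq> j}" "\<And>j. I - {j} = {i \<in> I. i \<noteq> j}" by auto
  then show ?thesis using sum.swap_restrict[OF assms assms, of f "\<lambda>i j. i \<noteq> j"] by simp
qed

lemma sum_offdiag_linear_ge:
  fixes e :: "'a \<Rightarrow> 'a \<Rightarrow> real" and x y :: "'a \<Rightarrow> real"
  assumes I: "finite I"
    and rows: "\<forall>i\<in>I. \<bar>\<Sum>j\<in>I - {i}. e i j\<bar> \<le> \<delta>" and cols: "\<forall>j\<in>I. \<bar>\<Sum>i\<in>I - {j}. e i j\<bar> \<le> \<delta>"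
  shows "- \<delta> * ((\<Sum>i\<in>I. \<bar>x i\<bar>) + (\<Sum>j\<in>I. \<bar>y j\<bar>)) \<le> (\<Sum>i\<in>I. \<Sum>j\<in>I - {i}. e i j * (x i + y j))"
proof -
  have "(\<Sum>i\<in>I. \<Sum>j\<in>I - {i}. e i j * (x i + y j))
      = (\<Sum>i\<in>I. \<Sum>j\<in>I - {i}. x i * e i j) + (\<Sum>i\<in>I. \<Sum>j\<in>I - {i}. y j * e i j)"
    unfolding sum.distrib[symmetric] by (intro sum.cong refl) (simp add: algebra_simps)
  also have "\<dots> = (\<Sum>i\<in>I. x i * (\<Sum>j\<in>I - {i}. e i j)) + (\<Sum>j\<in>I. y j * (\<Sum>i\<in>I - {j}. e i j))"
    by (simp add: sum_offdiag_swap[OF I, of "\<lambda>i j. y j * e i j"] sum_distrib_left)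
  finally have split: "(\<Sum>i\<in>I. \<Sum>j\<in>I - {i}. e i j * (x i + y j))
      = (\<Sum>i\<in>I. x i * (\<Sum>j\<in>I - {i}. e i j)) + (\<Sum>j\<in>I. y j * (\<Sum>i\<in>I - {j}. e i j))" .
  have weighted: "- \<delta> * \<bar>w\<bar> \<le> w * s" if "\<bar>s\<bar> \<le> \<delta>" for w s :: real
  proof -
    have "\<bar>w * s\<bar> \<le> \<bar>w\<bar> * \<delta>" unfolding abs_mult using that by (intro mult_left_mono) auto
    then show ?thesis by (simp add: abs_le_iff algebra_simps)
  qed
  have "(\<Sum>i\<in>I. - \<delta> * \<bar>x i\<bar>) \<le> (\<Sum>i\<in>I. x i * (\<Sum>j\<in>I - {i}. e i j))"
    using rows weighted by (intro sum_mono) auto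
  moreover have "(\<Sum>j\<in>I. - \<delta> * \<bar>y j\<bar>) \<le> (\<Sum>j\<in>I. y j * (\<Sum>i\<in>I - {j}. e i j))"
    using cols weighted by (intro sum_mono) auto
  ultimately show ?thesis unfolding split by (simp add: sum_distrib_left algebra_simps)
qed

lemma sum_offdiag_square_ge:
  fixes x y :: "'a \<Rightarrow> real"
  assumes I: "finite I" and x: "(\<Sum>i\<in>I. x i) = 0"
  shows "(real (card I) - 2) * ((\<Sum>i\<in>I. (x i)^2) + (\<Sum>j\<in>I. (y j)^2))
           \<le> (\<Sum>i\<in>I. \<Sum>j\<in>I - {i}. (x i + y j)^2)"
proof -
  define S where "S = (\<Sum>i\<in>I. (x i)^2) + (\<Sum>j\<in>I. (y j)^2)"
  have full: "(\<Sum>i\<in>I. \<Sum>j\<in>I. (x i + y j)^2) = card I * S"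
  proof -
    have "(\<Sum>i\<in>I. \<Sum>j\<in>I. (x i + y j)^2)
        = (\<Sum>i\<in>I. \<Sum>j\<in>I. (x i)^2 + 2 * (x i * y j) + (y j)^2)"
      by (simp add: power2_sum mult.assoc add_ac)
    also have "\<dots> = (\<Sum>i\<in>I. card I * (x i)^2 + 2 * (x i * (\<Sum>j\<in>I. y j)) + (\<Sum>j\<in>I. (y j)^2))"
      by (simp add: sum.distrib sum_distrib_left)
    also have "\<dots> = card I * (\<Sum>i\<in>I. (x i)^2) + 2 * ((\<Sum>i\<in>I. x i) * (\<Sum>j\<in>I. y j))
        + card I * (\<Sum>j\<in>I. (y j)^2)"
      by (simp add: sum.distrib sum_distrib_left[symmetric] sum_distrib_right[symmetric])
    finally show ?thesis using x unfolding S_def by (simp add: distrib_left)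
  qed
  have diag: "(\<Sum>i\<in>I. (x i + y i)^2) \<le> 2 * S"
  proof -
    have "(\<Sum>i\<in>I. (x i + y i)^2) \<le> (\<Sum>i\<in>I. 2 * (x i)^2 + 2 * (y i)^2)"
    proof (rule sum_mono)
      fix i
      show "(x i + y i)^2 \<le> 2 * (x i)^2 + 2 * (y i)^2"
        using zero_le_square[of "x i - y i"] by (simp add: power2_eq_square algebra_simps)
    qed
    also have "\<dots> = 2 * S" unfolding S_def by (simp add: sum.distrib sum_distrib_left)
    finally show ?thesis .
  qed
  have "(\<Sum>i\<in>I. \<Sum>j\<in>I - {i}. (x i + y j)^2) = (\<Sum>i\<in>I. (\<Sum>j\<in>I. (x i + y j)^2) - (x i + y i)^2)"
    by (intro sum.cong refl) (simp add: sum_diff1 I)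
  also have "\<dots> = card I * S - (\<Sum>i\<in>I. (x i + y i)^2)"
    using full by (simp add: sum_subtractf)
  finally show ?thesis using diag unfolding S_def[symmetric] by (simp add: left_diff_distrib)
qed

lemma bound_of_quadratic_vs_linear:
  fixes n k \<delta> S T :: real
  assumes n: "4 \<le> n" and k: "0 < k" and \<delta>: "0 \<le> \<delta>" and T: "0 \<le> T"
    and key: "k * (n - 2) * S \<le> \<delta> * T" and CS: "T^2 \<le> 2 * n * S"
  shows "T \<le> 4 * \<delta> / k"
proof -
  have "k * T \<le> 4 * \<delta>"
  proof (cases "T = 0")
    case False
    with T have T: "0 < T" by simp
    have "k * (n - 2) * T^2 \<le> k * (n - 2) * (2 * n * S)"
      using CS k n by (intro mult_left_mono) auto
    also have "\<dots> = 2 * n * (k * (n - 2) * S)" by (simp add: algebra_simps)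
    also have "\<dots> \<le> 2 * n * (\<delta> * T)"
      using key n by (intro mult_left_mono) auto
    finally have "((n - 2) * (k * T)) * T \<le> (2 * n * \<delta>) * T"
      by (simp add: power2_eq_square algebra_simps)
    then have "(n - 2) * (k * T) \<le> 2 * n * \<delta>"
      using T by (rule mult_right_le_imp_le)
    also have "\<dots> \<le> (n - 2) * (4 * \<delta>)"
      using mult_left_mono[OF n \<delta>] by (simp add: algebra_simps)
    finally show ?thesis using n by simp
  qed (use \<delta> in simp)
  then show ?thesis using k by (simp add: field_simps)
qed

text \<open>The quadratic form dominates \<open>(n - 2)\<close> times the squared \<open>\<ell>\<^sub>2\<close> norm and the linear form is
  at most \<open>\<delta>\<close> times the \<open>\<ell>\<^sub>1\<close> norm; Cauchy-Schwarz links the two norms.\<close>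
lemma l1_bound_of_offdiag_quadratic_le_0:
  fixes e :: "'a \<Rightarrow> 'a \<Rightarrow> real" and x y :: "'a \<Rightarrow> real"
  assumes I: "finite I" "4 \<le> card I" and x: "(\<Sum>i\<in>I. x i) = 0" and k: "0 < k"
    and rows: "\<forall>i\<in>I. \<bar>\<Sum>j\<in>I - {i}. e i j\<bar> \<le> \<delta>" and cols: "\<forall>j\<in>I. \<bar>\<Sum>i\<in>I - {j}. e i j\<bar> \<le> \<delta>"
    and le_0: "(\<Sum>i\<in>I. \<Sum>j\<in>I - {i}. e i j * (x i + y j) + k * (x i + y j)^2) \<le> 0"
  shows "(\<Sum>i\<in>I. \<bar>x i\<bar>) + (\<Sum>j\<in>I. \<bar>y j\<bar>) \<le> 4 * \<delta> / k"
proof -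
  define n where "n = real (card I)"
  define T where "T = (\<Sum>i\<in>I. \<bar>x i\<bar>) + (\<Sum>j\<in>I. \<bar>y j\<bar>)"
  define S where "S = (\<Sum>i\<in>I. (x i)^2) + (\<Sum>j\<in>I. (y j)^2)"
  have n: "4 \<le> n" using I unfolding n_def by simp
  have \<delta>: "0 \<le> \<delta>" using rows I(2) by (metis abs_ge_zero card.empty not_numeral_le_zero order_trans ex_in_conv)
  have "k * ((n - 2) * S) \<le> k * (\<Sum>i\<in>I. \<Sum>j\<in>I - {i}. (x i + y j)^2)"
    using sum_offdiag_square_ge[OF I(1) x, of y] k unfolding n_def S_def by (intro mult_left_mono) auto
  moreover have "- \<delta> * T \<le> (\<Sum>i\<in>I. \<Sum>j\<in>I - {i}. e i j * (x i + y j))"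
    unfolding T_def by (rule sum_offdiag_linear_ge[OF I(1) rows cols])
  ultimately have key: "k * (n - 2) * S \<le> \<delta> * T"
    using le_0 by (simp add: sum.distrib sum_distrib_left algebra_simps)
  have CS: "T^2 \<le> 2 * n * S"
  proof -
    have "(\<Sum>i\<in>I. \<bar>x i\<bar>)^2 \<le> n * (\<Sum>i\<in>I. (x i)^2)" "(\<Sum>j\<in>I. \<bar>y j\<bar>)^2 \<le> n * (\<Sum>j\<in>I. (y j)^2)"
      using sum_squared_le_sum_of_squares[of "\<lambda>i. \<bar>x i\<bar>" I] sum_squared_le_sum_of_squares[of "\<lambda>j. \<bar>y j\<bar>" I]
      unfolding n_def by (simp_all add: mult.commute)
    moreover have "T^2 \<le> 2 * (\<Sum>i\<in>I. \<bar>x i\<bar>)^2 + 2 * (\<Sum>j\<in>I. \<bar>y j\<bar>)^2"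
      unfolding T_def using zero_le_square[of "(\<Sum>i\<in>I. \<bar>x i\<bar>) - (\<Sum>j\<in>I. \<bar>y j\<bar>)"]
      by (simp add: power2_eq_square algebra_simps)
    ultimately show ?thesis unfolding S_def by (simp add: algebra_simps)
  qed
  have "0 \<le> T" unfolding T_def by (simp add: sum_nonneg)
  from bound_of_quadratic_vs_linear[OF n k \<delta> this key CS] show ?thesis unfolding T_def .
qed

text \<open>The degree equations relative to a reference point: \<open>p0 i j\<close> are its logits and
  \<open>Y i j\<close> the observed edges. A vector \<open>v\<close> holds the row shifts \<open>v 1, \<dots>, v n\<close> and the column
  shifts \<open>v (n + 1), \<dots>, v (2 n)\<close>; \<open>\<delta>\<close> bounds the residuals at the reference point and \<open>t\<close> is
  the radius obtained for the centred shifts.\<close>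
locale degree_equations =
  fixes n :: nat and p0 Y :: "nat \<Rightarrow> nat \<Rightarrow> real" and b \<delta> t :: real
  assumes n: "4 \<le> n"
    and curv: "\<And>i j. i \<in> {1..n} \<Longrightarrow> j \<in> {1..n} \<Longrightarrow> i \<noteq> j \<Longrightarrow> 1 / mu' (p0 i j) \<le> b"
    and rows: "\<And>i. i \<in> {1..n} \<Longrightarrow> \<bar>\<Sum>j\<in>{1..n} - {i}. mu (p0 i j) - Y i j\<bar> \<le> \<delta>"
    and cols: "\<And>j. j \<in> {1..n} \<Longrightarrow> \<bar>\<Sum>i\<in>{1..n} - {j}. mu (p0 i j) - Y i j\<bar> \<le> \<delta>"
    and t: "t < 1"
    and gain: "(4 * exp 2 * b + 1) * \<delta> < t / (exp 2 * b) * (real n - 1)"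
begin

abbreviation I :: "nat set" where "I \<equiv> {1..n}"

definition shift :: "(nat \<Rightarrow> real) \<Rightarrow> nat \<Rightarrow> nat \<Rightarrow> real" where
  "shift v i j = v i + v (n + j)"

definition neg_loglik :: "(nat \<Rightarrow> real) \<Rightarrow> real" where
  "neg_loglik v = (\<Sum>i\<in>I. \<Sum>j\<in>I - {i}. ln (1 + exp (p0 i j + shift v i j)) - Y i j * shift v i j)"

definition grad :: "(nat \<Rightarrow> real) \<Rightarrow> nat \<Rightarrow> real" where
  "grad v k = (\<Sum>i\<in>I. \<Sum>j\<in>I - {i}.
     (mu (p0 i j + shift v i j) - Y i j) * (of_bool (i = k) + of_bool (n + j = k)))"

definition shift_box :: "(nat \<Rightarrow> real) set" where
  "shift_box = {v. \<forall>k. (k \<in> {1..2*n} \<longrightarrow> v k \<in> {-1..1}) \<and> (k \<notin> {1..2*n} \<longrightarrow> v k = 0)}"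

lemma b_pos: "0 < b"
  using curv[of 1 2] inverse_mu'_ge_4[of "p0 1 2"] n by force

lemma \<delta>_nonneg: "0 \<le> \<delta>"
  using rows[of 1] n abs_ge_zero order_trans by fastforce

lemma t_pos: "0 < t"
proof -
  have "0 \<le> (4 * exp 2 * b + 1) * \<delta>"
    using b_pos \<delta>_nonneg by (intro mult_nonneg_nonneg) auto
  then have "0 < t / (exp 2 * b) * (real n - 1)" using gain by linarith
  moreover have "0 < exp 2 * b" "0 < real n - 1" using b_pos n by auto
  ultimately show ?thesis by (simp add: zero_less_mult_iff zero_less_divide_iff)
qed

lemma compact_shift_box: "compact shift_box"
proof -
  have "shift_box = PiE UNIV (\<lambda>k. if k \<in> {1..2*n} then {-1..1} else {0})"
    unfolding shift_box_def PiE_def Pi_def by auto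
  moreover have "compactin (product_topology (\<lambda>_. euclidean) UNIV)
          (PiE UNIV (\<lambda>k. if k \<in> {1..2*n} then {-1..1::real} else {0}))"
    by (subst compactin_PiE) auto
  ultimately show ?thesis by (simp add: euclidean_product_topology)
qed

lemma neg_loglik_attains_min: "\<exists>v\<in>shift_box. \<forall>u\<in>shift_box. neg_loglik v \<le> neg_loglik u"
proof -
  have "continuous_on shift_box neg_loglik"
    unfolding neg_loglik_def shift_def
    by (intro continuous_intros continuous_on_subset[OF continuous_on_product_coordinates])
      (auto simp: one_plus_exp_pos[THEN dual_order.strict_implies_not_eq])
  moreover have "(\<lambda>_. 0) \<in> shift_box" unfolding shift_box_def by auto
  ultimately show ?thesis using continuous_attains_inf[OF compact_shift_box] by blast
qed

lemma has_real_derivative_neg_loglik: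
  "((\<lambda>s. neg_loglik (v(k := s))) has_real_derivative grad (v(k := s)) k) (at s)"
  unfolding neg_loglik_def grad_def
proof (intro DERIV_sum)
  fix i j
  have shift: "((\<lambda>s. shift (v(k := s)) i j) has_real_derivative of_bool (i = k) + of_bool (n + j = k)) (at s)"
    unfolding shift_def by (cases "i = k"; cases "n + j = k") (auto intro!: derivative_eq_intros)
  show "((\<lambda>s. ln (1 + exp (p0 i j + shift (v(k := s)) i j)) - Y i j * shift (v(k := s)) i j)
      has_real_derivative (mu (p0 i j + shift (v(k := s)) i j) - Y i j)
        * (of_bool (i = k) + of_bool (n + j = k))) (at s)"
    by (rule derivative_eq_intros DERIV_chain2[OF has_real_derivative_ln_one_plus_exp] shift refl
        | simp add: algebra_simps)+
qed

text \<open>First-order optimality on the box, for both faces at once.\<close>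
lemma box_minimizer_grad_sign:
  assumes v: "v \<in> shift_box" and min: "\<forall>u\<in>shift_box. neg_loglik v \<le> neg_loglik u"
    and k: "k \<in> {1..2*n}" and s: "\<bar>s\<bar> \<le> 1"
  shows "(v k - s) * grad v k \<le> 0"
proof -
  have d: "((\<lambda>r. neg_loglik (v(k := r))) has_real_derivative grad v k) (at (v k))"
    using has_real_derivative_neg_loglik[of v k "v k"] by simp
  have in_box: "v(k := r) \<in> shift_box" if "-1 \<le> r" "r \<le> 1" for r
    using v k that unfolding shift_box_def by auto
  have vk: "-1 \<le> v k" "v k \<le> 1" using v k unfolding shift_box_def by auto
  have "grad v k \<le> 0" if "s < v k"
  proof (rule ccontr)
    assume "\<not> grad v k \<le> 0"
    then obtain e where e: "e > 0" "\<forall>h>0. h < e \<longrightarrow> neg_loglik (v(k := v k - h)) < neg_loglik (v(k := v k))"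
      using DERIV_pos_inc_left[OF d] by force
    define h where "h = min (e / 2) (v k + 1)"
    have "0 < h" "h < e" using e that s unfolding h_def by auto
    moreover have "v(k := v k - h) \<in> shift_box" using vk \<open>0 < h\<close> by (intro in_box) (auto simp: h_def)
    ultimately show False using min e(2) by fastforce
  qed
  moreover have "0 \<le> grad v k" if "v k < s"
  proof (rule ccontr)
    assume "\<not> 0 \<le> grad v k"
    then obtain e where e: "e > 0" "\<forall>h>0. h < e \<longrightarrow> neg_loglik (v(k := v k)) > neg_loglik (v(k := v k + h))"
      using DERIV_neg_dec_right[OF d] by force
    define h where "h = min (e / 2) (1 - v k)"
    have "0 < h" "h < e" using e that s unfolding h_def by auto
    moreover have "v(k := v k + h) \<in> shift_box" using vk \<open>0 < h\<close> by (intro in_box) (auto simp: h_def)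
    ultimately show False using min e(2) by fastforce
  qed
  ultimately show ?thesis by (cases "s < v k"; cases "v k < s") (auto intro: mult_nonneg_nonpos mult_nonpos_nonneg)
qed

lemma grad_row:
  assumes "i \<in> I" shows "grad v i = (\<Sum>j\<in>I - {i}. mu (p0 i j + shift v i j) - Y i j)"
proof -
  have "grad v i = (\<Sum>i'\<in>I. if i' = i then (\<Sum>j\<in>I - {i'}. mu (p0 i' j + shift v i' j) - Y i' j) else 0)"
    unfolding grad_def using assms by (intro sum.cong refl) auto
  then show ?thesis using assms by simp
qed

lemma grad_col:
  assumes "j \<in> I" shows "grad v (n + j) = (\<Sum>i\<in>I - {j}. mu (p0 i j + shift v i j) - Y i j)"
proof -
  have "(\<Sum>j'\<in>I - {i}. (mu (p0 i j' + shift v i j') - Y i j') * (of_bool (i = n + j) + of_bool (n + j' = n + j)))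
      = (if i = j then 0 else mu (p0 i j + shift v i j) - Y i j)" if "i \<in> I" for i
    using assms that by (cases "i = j") (simp_all add: sum.delta')
  then have "grad v (n + j) = (\<Sum>i\<in>I. if i = j then 0 else mu (p0 i j + shift v i j) - Y i j)"
    unfolding grad_def by (intro sum.cong) auto
  also have "\<dots> = (\<Sum>i\<in>I - {j}. mu (p0 i j + shift v i j) - Y i j)"
    by (rule sum.mono_neutral_cong_right) auto
  finally show ?thesis .
qed

definition avg :: "(nat \<Rightarrow> real) \<Rightarrow> real" where
  "avg v = (\<Sum>i\<in>I. v i) / n"

definition row_part :: "(nat \<Rightarrow> real) \<Rightarrow> nat \<Rightarrow> real" where
  "row_part v i = v i - avg v"

definition col_part :: "(nat \<Rightarrow> real) \<Rightarrow> nat \<Rightarrow> real" where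
  "col_part v j = v (n + j) + avg v"

definition spread :: "(nat \<Rightarrow> real) \<Rightarrow> real" where
  "spread v = (\<Sum>i\<in>I. \<bar>row_part v i\<bar>) + (\<Sum>j\<in>I. \<bar>col_part v j\<bar>)"

lemma shift_eq_parts: "shift v i j = row_part v i + col_part v j"
  unfolding shift_def row_part_def col_part_def by simp

lemma sum_row_part: "(\<Sum>i\<in>I. row_part v i) = 0"
  using n unfolding row_part_def avg_def by (simp add: sum_subtractf)

lemma abs_avg_le_1: "v \<in> shift_box \<Longrightarrow> \<bar>avg v\<bar> \<le> 1"
proof -
  assume v: "v \<in> shift_box"
  have "\<bar>\<Sum>i\<in>I. v i\<bar> \<le> (\<Sum>i\<in>I. 1)"
    using v unfolding shift_box_def by (intro order_trans[OF sum_abs sum_mono]) auto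
  then show ?thesis using n unfolding avg_def by (simp add: divide_le_eq)
qed

lemma neg_loglik_decrease_ge:
  assumes v: "v \<in> shift_box"
  shows "(\<Sum>i\<in>I. \<Sum>j\<in>I - {i}. (mu (p0 i j) - Y i j) * shift v i j + (shift v i j)^2 / (2 * exp 2 * b))
    \<le> neg_loglik v - neg_loglik (\<lambda>_. 0)"
proof -
  have "(mu (p0 i j) - Y i j) * shift v i j + (shift v i j)^2 / (2 * exp 2 * b)
      \<le> ln (1 + exp (p0 i j + shift v i j)) - Y i j * shift v i j - ln (1 + exp (p0 i j))"
    if "i \<in> I" "j \<in> I - {i}" for i j
  proof -
    have "\<bar>v i\<bar> \<le> 1" "\<bar>v (n + j)\<bar> \<le> 1"
      using v that unfolding shift_box_def by (auto simp: abs_le_iff)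
    then have "\<bar>shift v i j\<bar> \<le> 2" unfolding shift_def by linarith
    then have convex: "(shift v i j)^2 * (exp (- 2) * mu' (p0 i j)) / 2
        \<le> ln (1 + exp (p0 i j + shift v i j)) - ln (1 + exp (p0 i j)) - mu (p0 i j) * shift v i j"
      by (rule ln_one_plus_exp_strongly_convex)
    have curvature: "1 / (2 * exp 2 * b) \<le> exp (- 2) * mu' (p0 i j) / 2"
      using mu'_ge_of_inverse_le[OF curv[of i j]] that b_pos by (auto simp: exp_minus field_simps)
    have "(shift v i j)^2 / (2 * exp 2 * b) \<le> (exp (- 2) * mu' (p0 i j) / 2) * (shift v i j)^2"
      using mult_right_mono[OF curvature, of "(shift v i j)^2"] by simp
    with convex show ?thesis unfolding left_diff_distrib by (simp add: mult.commute)
  qed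
  then have "(\<Sum>i\<in>I. \<Sum>j\<in>I - {i}. (mu (p0 i j) - Y i j) * shift v i j + (shift v i j)^2 / (2 * exp 2 * b))
      \<le> (\<Sum>i\<in>I. \<Sum>j\<in>I - {i}. ln (1 + exp (p0 i j + shift v i j)) - Y i j * shift v i j
        - ln (1 + exp (p0 i j)))"
    by (intro sum_mono) auto
  also have "\<dots> = neg_loglik v - neg_loglik (\<lambda>_. 0)"
    unfolding neg_loglik_def shift_def by (simp add: sum_subtractf)
  finally show ?thesis .
qed

lemma spread_le:
  assumes v: "v \<in> shift_box" and min: "\<forall>u\<in>shift_box. neg_loglik v \<le> neg_loglik u"
  shows "spread v \<le> 8 * exp 2 * b * \<delta>"
proof -
  define k where "k = 1 / (2 * exp 2 * b)"
  have k: "0 < k" using b_pos unfolding k_def by simp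
  have "neg_loglik v \<le> neg_loglik (\<lambda>_. 0)"
    using min unfolding shift_box_def by auto
  then have "(\<Sum>i\<in>I. \<Sum>j\<in>I - {i}. (mu (p0 i j) - Y i j) * (row_part v i + col_part v j)
      + k * (row_part v i + col_part v j)^2) \<le> 0"
    using neg_loglik_decrease_ge[OF v] unfolding shift_eq_parts k_def by simp
  then have "spread v \<le> 4 * \<delta> / k"
    unfolding spread_def using rows cols n
    by (intro l1_bound_of_offdiag_quadratic_le_0[OF _ _ sum_row_part k]) auto
  then show ?thesis unfolding k_def by (simp add: mult_ac)
qed

lemma spread_gain:
  assumes "v \<in> shift_box" "\<forall>u\<in>shift_box. neg_loglik v \<le> neg_loglik u" "i \<in> I"
  shows "spread v / 2 + \<delta> < t / (exp 2 * b) * card (I - {i})"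
  using spread_le[OF assms(1,2)] gain assms(3) n by (simp add: of_nat_diff algebra_simps)

lemma sum_col_part_le_spread: "(\<Sum>j\<in>I - {i}. \<bar>col_part v j\<bar>) \<le> spread v"
proof -
  have "(\<Sum>j\<in>I - {i}. \<bar>col_part v j\<bar>) \<le> (\<Sum>j\<in>I. \<bar>col_part v j\<bar>)" by (rule sum_mono2) auto
  moreover have "0 \<le> (\<Sum>i\<in>I. \<bar>row_part v i\<bar>)" by (simp add: sum_nonneg)
  ultimately show ?thesis unfolding spread_def by linarith
qed

lemma sum_row_part_le_spread: "(\<Sum>i\<in>I - {j}. \<bar>row_part v i\<bar>) \<le> spread v"
proof -
  have "(\<Sum>i\<in>I - {j}. \<bar>row_part v i\<bar>) \<le> (\<Sum>i\<in>I. \<bar>row_part v i\<bar>)" by (rule sum_mono2) auto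
  moreover have "0 \<le> (\<Sum>j\<in>I. \<bar>col_part v j\<bar>)" by (simp add: sum_nonneg)
  ultimately show ?thesis unfolding spread_def by linarith
qed

lemma abs_row_part_le:
  assumes v: "v \<in> shift_box" and min: "\<forall>u\<in>shift_box. neg_loglik v \<le> neg_loglik u" and i: "i \<in> I"
  shows "\<bar>row_part v i\<bar> \<le> t"
proof (rule ccontr)
  assume "\<not> \<bar>row_part v i\<bar> \<le> t"
  then have "0 < row_part v i * (\<Sum>j\<in>I - {i}. mu (p0 i j + row_part v i + col_part v j) - Y i j)"
    using curv i rows[OF i] t t_pos spread_gain[OF v min i]
    by (intro sum_mu_shift_sign[OF _ sum_col_part_le_spread]) auto
  moreover have "(v i - avg v) * grad v i \<le> 0"
    using i n by (intro box_minimizer_grad_sign[OF v min] abs_avg_le_1[OF v]) auto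
  ultimately show False
    using grad_row[OF i] unfolding shift_eq_parts row_part_def by (simp add: add.assoc)
qed

lemma abs_col_part_le:
  assumes v: "v \<in> shift_box" and min: "\<forall>u\<in>shift_box. neg_loglik v \<le> neg_loglik u" and j: "j \<in> I"
  shows "\<bar>col_part v j\<bar> \<le> t"
proof (rule ccontr)
  assume "\<not> \<bar>col_part v j\<bar> \<le> t"
  then have "0 < col_part v j * (\<Sum>i\<in>I - {j}. mu (p0 i j + col_part v j + row_part v i) - Y i j)"
    using curv j cols[OF j] t t_pos spread_gain[OF v min j]
    by (intro sum_mu_shift_sign[OF _ sum_row_part_le_spread]) auto
  moreover have "(v (n + j) - - avg v) * grad v (n + j) \<le> 0"
    using j abs_avg_le_1[OF v] by (intro box_minimizer_grad_sign[OF v min]) auto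
  ultimately show False
    using grad_col[OF j] unfolding shift_eq_parts col_part_def by (simp add: add_ac)
qed

text \<open>The minimiser itself may touch the boundary of the box, since only the sums
  \<open>v i + v (n + j)\<close> matter; its recentred version is interior, hence a critical point.\<close>
definition centre :: "(nat \<Rightarrow> real) \<Rightarrow> nat \<Rightarrow> real" where
  "centre v k = (if k \<in> I then row_part v k else if k \<in> {n+1..2*n} then col_part v (k - n) else 0)"

lemma shift_centre: "i \<in> I \<Longrightarrow> j \<in> I \<Longrightarrow> shift (centre v) i j = shift v i j"
  using shift_eq_parts[of v i j] unfolding shift_def[of "centre v"] centre_def by auto

lemma grad_centre_eq_0:
  assumes v: "v \<in> shift_box" and min: "\<forall>u\<in>shift_box. neg_loglik v \<le> neg_loglik u"
    and k: "k \<in> {1..2*n}"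
  shows "grad (centre v) k = 0"
proof -
  have interior: "\<bar>centre v k\<bar> < 1" if "k \<in> {1..2*n}" for k
  proof (cases "k \<in> I")
    case True
    then show ?thesis using abs_row_part_le[OF v min True] t unfolding centre_def by simp
  next
    case False
    then have "k - n \<in> I" "k \<in> {n+1..2*n}" using that by auto
    then show ?thesis using abs_col_part_le[OF v min \<open>k - n \<in> I\<close>] t False unfolding centre_def by simp
  qed
  have w: "centre v \<in> shift_box" unfolding shift_box_def
  proof (intro CollectI allI conjI impI)
    fix k assume "k \<in> {1..2*n}"
    then show "centre v k \<in> {-1..1}" using interior[of k] by (simp add: abs_less_iff)
  next
    fix k assume "k \<notin> {1..2*n}"
    then show "centre v k = 0" unfolding centre_def by auto
  qed
  have "neg_loglik (centre v) = neg_loglik v"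
    unfolding neg_loglik_def by (intro sum.cong refl) (auto simp: shift_centre)
  then have min_w: "\<forall>u\<in>shift_box. neg_loglik (centre v) \<le> neg_loglik u" using min by simp
  show ?thesis
    using box_minimizer_grad_sign[OF w min_w k, of 1] box_minimizer_grad_sign[OF w min_w k, of "- 1"]
      interior[OF k] by (auto simp: mult_le_0_iff abs_less_iff)
qed

lemma degree_equations_solvable:
  "\<exists>a c. c n = 0 \<and> (\<forall>i\<in>I. \<bar>a i\<bar> \<le> 2 * t) \<and> (\<forall>j\<in>I. \<bar>c j\<bar> \<le> 2 * t)
     \<and> (\<forall>i\<in>I. (\<Sum>j\<in>I - {i}. mu (p0 i j + a i + c j) - Y i j) = 0)
     \<and> (\<forall>j\<in>I. (\<Sum>i\<in>I - {j}. mu (p0 i j + a i + c j) - Y i j) = 0)"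
proof -
  obtain v where v: "v \<in> shift_box" and min: "\<forall>u\<in>shift_box. neg_loglik v \<le> neg_loglik u"
    using neg_loglik_attains_min by blast
  define a where "a i = row_part v i + col_part v n" for i
  define c where "c j = col_part v j - col_part v n" for j
  have ac: "a i + c j = shift (centre v) i j" if "i \<in> I" "j \<in> I" for i j
    using shift_centre[OF that] shift_eq_parts[of v i j] unfolding a_def c_def by simp
  have "n \<in> I" using n by simp
  show ?thesis
  proof (intro exI conjI ballI)
    show "\<bar>a i\<bar> \<le> 2 * t" if "i \<in> I" for i
      using abs_row_part_le[OF v min that] abs_col_part_le[OF v min \<open>n \<in> I\<close>] unfolding a_def by linarith
    show "\<bar>c j\<bar> \<le> 2 * t" if "j \<in> I" for j
      using abs_col_part_le[OF v min that] abs_col_part_le[OF v min \<open>n \<in> I\<close>] unfolding c_def by linarith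
    show "(\<Sum>j\<in>I - {i}. mu (p0 i j + a i + c j) - Y i j) = 0" if i: "i \<in> I" for i
      using grad_centre_eq_0[OF v min, of i] grad_row[OF i, of "centre v"] i ac by (simp add: add.assoc)
    show "(\<Sum>i\<in>I - {j}. mu (p0 i j + a i + c j) - Y i j) = 0" if j: "j \<in> I" for j
      using grad_centre_eq_0[OF v min, of "n + j"] grad_col[OF j, of "centre v"] j ac by (simp add: add.assoc)
  qed (simp add: c_def)
qed

end

lemma finite_offdiag: "finite (offdiag n)"
  by (rule finite_subset[of _ "{1..n} \<times> {1..n}"]) (auto simp: offdiag_def)

lemma prob_sum_bernoulli_deviation:
  fixes D J :: "'a set" and q :: "'a \<Rightarrow> real"
  assumes D: "finite D" and J: "J \<subseteq> D" "J \<noteq> {}" and q: "\<forall>k\<in>D. 0 \<le> q k \<and> q k \<le> 1"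
    and \<epsilon>: "0 \<le> \<epsilon>"
  shows "measure_pmf.prob (Pi_pmf D False (\<lambda>k. bernoulli_pmf (q k)))
           {A. \<epsilon> \<le> \<bar>(\<Sum>k\<in>J. of_bool (A k)) - (\<Sum>k\<in>J. q k)\<bar>} \<le> 2 * exp (- 2 * \<epsilon>^2 / card J)"
proof -
  define P where "P = Pi_pmf D False (\<lambda>k. bernoulli_pmf (q k))"
  have fin: "finite J" using D J finite_subset by blast
  have coords: "prob_space.indep_vars (measure_pmf P) (\<lambda>_. count_space UNIV) (\<lambda>k A. A k) J"
    using prob_space.indep_vars_subset[OF measure_pmf.prob_space_axioms indep_vars_Pi_pmf[OF D] J(1)]
    unfolding P_def .
  have indep: "prob_space.indep_vars (measure_pmf P) (\<lambda>_. borel) (\<lambda>k A. (of_bool (A k) :: real)) J"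
    by (rule prob_space.indep_vars_compose2[OF measure_pmf.prob_space_axioms coords, of "\<lambda>_ b. of_bool b"]) auto
  have expectation: "measure_pmf.expectation P (\<lambda>A. of_bool (A k) :: real) = q k" if "k \<in> J" for k
  proof -
    have "map_pmf (\<lambda>A. A k) P = bernoulli_pmf (q k)"
      unfolding P_def using that J by (subst Pi_pmf_component[OF D]) auto
    then have "measure_pmf.expectation P (\<lambda>A. of_bool (A k) :: real)
        = measure_pmf.expectation (bernoulli_pmf (q k)) (\<lambda>b. of_bool b :: real)"
      by (metis integral_map_pmf)
    then show ?thesis using q that J by auto
  qed
  interpret Hoeffding_ineq "measure_pmf P" J "\<lambda>k A. of_bool (A k)" "\<lambda>_. 0" "\<lambda>_. 1" "\<Sum>k\<in>J. q k"
  proof unfold_locales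
    show "AE A in measure_pmf P. of_bool (A k) \<in> {0..1::real}" for k by simp
  qed (use fin indep expectation in simp_all)
  have "measure_pmf.prob P {A \<in> space (measure_pmf P). \<epsilon> \<le> \<bar>(\<Sum>k\<in>J. of_bool (A k)) - (\<Sum>k\<in>J. q k)\<bar>}
        \<le> 2 * exp (- 2 * \<epsilon>^2 / (\<Sum>k\<in>J. (1 - 0)^2))"
    by (rule Hoeffding_ineq_abs_ge[OF \<epsilon>]) (use fin J in auto)
  then show ?thesis unfolding P_def by simp
qed

lemma exp_neg_two_ln_le:
  assumes n: "2 \<le> n"
  shows "2 * exp (- 2 * (sqrt (real n * ln (real n)))^2 / real (n - 1)) \<le> 2 / (real n)^2"
proof -
  have ln: "0 \<le> ln (real n)" using n by simp
  have sq: "(sqrt (real n * ln (real n)))^2 = real n * ln (real n)" using ln by simp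
  have n1: "0 < real (n - 1)" "real (n - 1) \<le> real n" using n by auto
  have "ln (real n) \<le> real n * ln (real n) / real (n - 1)"
    using n1 ln by (simp add: le_divide_eq mult_right_mono)
  then have "exp (- 2 * (real n * ln (real n)) / real (n - 1)) \<le> exp (- 2 * ln (real n))" by simp
  also have "exp (- 2 * ln (real n)) = 1 / (real n)^2"
  proof -
    have "exp (2 * ln (real n)) = exp (ln (real n)) * exp (ln (real n))"
      unfolding mult_2 exp_add ..
    also have "\<dots> = (real n)^2" using n by (simp add: power2_eq_square)
    finally show ?thesis by (simp add: exp_minus inverse_eq_divide)
  qed
  finally show ?thesis unfolding sq by simp
qed

text \<open>A single row or column of the adjacency matrix, indexed through an injection \<open>g\<close>.\<close>
lemma prob_line_deviation_le:
  assumes n: "2 \<le> n" and q: "\<forall>k\<in>offdiag n. 0 \<le> q k \<and> q k \<le> 1"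
    and g: "inj_on g S" "g ` S \<subseteq> offdiag n" "card S = n - 1"
  shows "measure_pmf.prob (Pi_pmf (offdiag n) False (\<lambda>k. bernoulli_pmf (q k)))
           {A. sqrt (real n * ln (real n)) \<le> \<bar>(\<Sum>s\<in>S. of_bool (A (g s))) - (\<Sum>s\<in>S. q (g s))\<bar>}
         \<le> 2 / (real n)^2"
proof -
  note fin = finite_offdiag[of n]
  have card: "card (g ` S) = n - 1" using g by (simp add: card_image)
  then have "g ` S \<noteq> {}" using n by auto
  moreover have "\<And>A. (\<Sum>s\<in>S. (of_bool (A (g s)) :: real)) = (\<Sum>k\<in>g ` S. of_bool (A k))"
    "(\<Sum>s\<in>S. q (g s)) = (\<Sum>k\<in>g ` S. q k)"
    using g(1) by (simp_all add: sum.reindex)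
  ultimately have "measure_pmf.prob (Pi_pmf (offdiag n) False (\<lambda>k. bernoulli_pmf (q k)))
           {A. sqrt (real n * ln (real n)) \<le> \<bar>(\<Sum>s\<in>S. of_bool (A (g s))) - (\<Sum>s\<in>S. q (g s))\<bar>}
         \<le> 2 * exp (- 2 * (sqrt (real n * ln (real n)))^2 / real (n - 1))"
    using prob_sum_bernoulli_deviation[OF fin g(2) _ q, of "sqrt (real n * ln (real n))"] n card
    by simp
  then show ?thesis using exp_neg_two_ln_le[OF n] by linarith
qed

definition degrees_concentrated :: "nat \<Rightarrow> (nat \<times> nat \<Rightarrow> real) \<Rightarrow> (nat \<times> nat \<Rightarrow> bool) \<Rightarrow> bool" where
  "degrees_concentrated n q A \<longleftrightarrow>
     (\<forall>i\<in>{1..n}. \<bar>outdeg n A i - (\<Sum>j\<in>{1..n} - {i}. q (i, j))\<bar> < sqrt (real n * ln (real n))) \<and>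
     (\<forall>j\<in>{1..n}. \<bar>indeg n A j - (\<Sum>i\<in>{1..n} - {j}. q (i, j))\<bar> < sqrt (real n * ln (real n)))"

lemma prob_degrees_concentrated:
  assumes n: "2 \<le> n" and q: "\<forall>k\<in>offdiag n. 0 \<le> q k \<and> q k \<le> 1"
  shows "1 - 4 / real n
    \<le> measure_pmf.prob (Pi_pmf (offdiag n) False (\<lambda>k. bernoulli_pmf (q k))) {A. degrees_concentrated n q A}"
proof -
  define P where "P = Pi_pmf (offdiag n) False (\<lambda>k. bernoulli_pmf (q k))"
  define \<epsilon> where "\<epsilon> = sqrt (real n * ln (real n))"
  define R where "R i = {A. \<epsilon> \<le> \<bar>(\<Sum>j\<in>{1..n} - {i}. of_bool (A (i, j))) - (\<Sum>j\<in>{1..n} - {i}. q (i, j))\<bar>}" for i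
  define C where "C j = {A. \<epsilon> \<le> \<bar>(\<Sum>i\<in>{1..n} - {j}. of_bool (A (i, j))) - (\<Sum>i\<in>{1..n} - {j}. q (i, j))\<bar>}" for j
  have R: "measure_pmf.prob P (R i) \<le> 2 / (real n)^2" if i: "i \<in> {1..n}" for i
  proof -
    have "inj_on (\<lambda>j. (i, j)) ({1..n} - {i})" "(\<lambda>j. (i, j)) ` ({1..n} - {i}) \<subseteq> offdiag n"
      "card ({1..n} - {i}) = n - 1"
      using i by (auto simp: inj_on_def offdiag_def)
    from prob_line_deviation_le[OF n q this] show ?thesis unfolding P_def R_def \<epsilon>_def .
  qed
  have C: "measure_pmf.prob P (C j) \<le> 2 / (real n)^2" if j: "j \<in> {1..n}" for j
  proof -
    have "inj_on (\<lambda>i. (i, j)) ({1..n} - {j})" "(\<lambda>i. (i, j)) ` ({1..n} - {j}) \<subseteq> offdiag n"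
      "card ({1..n} - {j}) = n - 1"
      using j by (auto simp: inj_on_def offdiag_def)
    from prob_line_deviation_le[OF n q this] show ?thesis unfolding P_def C_def \<epsilon>_def .
  qed
  have "measure_pmf.prob P ((\<Union>i\<in>{1..n}. R i) \<union> (\<Union>j\<in>{1..n}. C j))
      \<le> (\<Sum>i\<in>{1..n}. measure_pmf.prob P (R i)) + (\<Sum>j\<in>{1..n}. measure_pmf.prob P (C j))"
    by (intro order_trans[OF measure_Un_le] add_mono measure_pmf.finite_measure_subadditive_finite) auto
  also have "\<dots> \<le> (\<Sum>i\<in>{1..n}. 2 / (real n)^2) + (\<Sum>j\<in>{1..n}. 2 / (real n)^2)"
    using R C by (intro add_mono sum_mono) auto
  also have "\<dots> = 4 / real n" using n by (simp add: power2_eq_square field_simps)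
  finally have bad: "measure_pmf.prob P ((\<Union>i\<in>{1..n}. R i) \<union> (\<Union>j\<in>{1..n}. C j)) \<le> 4 / real n" .
  have "UNIV - ((\<Union>i\<in>{1..n}. R i) \<union> (\<Union>j\<in>{1..n}. C j)) = {A. degrees_concentrated n q A}"
    unfolding degrees_concentrated_def outdeg_def indeg_def R_def C_def \<epsilon>_def by (auto simp: not_le)
  then show ?thesis
    using measure_pmf.prob_compl[of "(\<Union>i\<in>{1..n}. R i) \<union> (\<Union>j\<in>{1..n}. C j)" P] bad
    unfolding P_def by simp
qed

lemma mu_monotone_product_nonneg: "0 \<le> (x - y) * (mu x - mu y)"
  using mu_mono[of x y] mu_mono[of y x]
  by (cases "x \<le> y") (auto intro: mult_nonpos_nonpos)

lemma mu_monotone_product_eq_0: "(x - y) * (mu x - mu y) = 0 \<Longrightarrow> x = y"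
  using mu_strict_mono[of x y] mu_strict_mono[of y x] by (cases x y rule: linorder_cases) auto

lemma is_solution_row_sum:
  assumes "is_solution n Z A gam eta" "i \<in> {1..n}"
  shows "(\<Sum>j\<in>{1..n} - {i}. mu (pi_ij n Z eta gam i j)) = outdeg n A i"
  using assms unfolding is_solution_def F_fun_def by (auto dest!: bspec[of _ _ i])

lemma is_solution_col_sum:
  assumes "is_solution n Z A gam eta" "j \<in> {1..n-1}"
  shows "(\<Sum>i\<in>{1..n} - {j}. mu (pi_ij n Z eta gam i j)) = indeg n A j"
  using assms unfolding is_solution_def F_fun_def by (auto dest!: bspec[of _ _ "n + j"])

lemma additive_offdiag_eq_0:
  fixes D E :: "nat \<Rightarrow> real"
  assumes n: "3 \<le> n" and E: "E n = 0"
    and DE: "\<And>i j. i \<in> {1..n} \<Longrightarrow> j \<in> {1..n} \<Longrightarrow> i \<noteq> j \<Longrightarrow> D i + E j = 0"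
  shows "\<forall>i\<in>{1..n}. D i = 0 \<and> E i = 0"
proof -
  have D: "D i = 0" if "i \<in> {1..n}" "i \<noteq> n" for i
    using DE[OF that(1) _ that(2)] E n by simp
  have E': "E j = 0" if "j \<in> {1..n}" for j
  proof -
    define i where "i = (if j = 1 then 2 else 1 :: nat)"
    have "i \<in> {1..n}" "i \<noteq> j" "i \<noteq> n" using n that unfolding i_def by auto
    then show ?thesis using DE[OF _ that] D by fastforce
  qed
  have "D n = 0" using DE[of n 1] E'[of 1] n by simp
  then show ?thesis using D E' by blast
qed

text \<open>Pairing the logit differences with the differences of the degree sums gives a sum of
  terms \<open>(x - y) (mu x - mu y) \<ge> 0\<close> that vanishes.\<close>
lemma offdiag_eq_of_mu_sums_eq:
  fixes P P' :: "'a \<Rightarrow> 'a \<Rightarrow> real" and D E :: "'a \<Rightarrow> real"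
  assumes I: "finite I" and PP': "\<And>i j. P i j - P' i j = D i + E j"
    and rows: "\<forall>i\<in>I. (\<Sum>j\<in>I - {i}. mu (P i j) - mu (P' i j)) = 0"
    and cols: "\<forall>j\<in>I. E j * (\<Sum>i\<in>I - {j}. mu (P i j) - mu (P' i j)) = 0"
  shows "\<forall>i\<in>I. \<forall>j\<in>I - {i}. P i j = P' i j"
proof -
  have "(\<Sum>i\<in>I. \<Sum>j\<in>I - {i}. (P i j - P' i j) * (mu (P i j) - mu (P' i j)))
      = (\<Sum>i\<in>I. D i * (\<Sum>j\<in>I - {i}. mu (P i j) - mu (P' i j)))
        + (\<Sum>j\<in>I. E j * (\<Sum>i\<in>I - {j}. mu (P i j) - mu (P' i j)))"
    unfolding PP' distrib_right sum.distrib sum_distrib_left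
    using sum_offdiag_swap[OF I, of "\<lambda>i j. E j * (mu (P i j) - mu (P' i j))"] by simp
  also have "\<dots> = 0"
  proof -
    have "(\<Sum>j\<in>I. E j * (\<Sum>i\<in>I - {j}. mu (P i j) - mu (P' i j))) = 0"
      using cols by (intro sum.neutral) blast
    then show ?thesis using rows by simp
  qed
  finally have "\<forall>i\<in>I. \<forall>j\<in>I - {i}. (P i j - P' i j) * (mu (P i j) - mu (P' i j)) = 0"
    using mu_monotone_product_nonneg I
    by (subst (asm) sum_nonneg_eq_0_iff) (auto simp: sum_nonneg_eq_0_iff intro: sum_nonneg)
  then show ?thesis using mu_monotone_product_eq_0 by blast
qed

lemma is_solution_unique:
  assumes n: "3 \<le> n" and sol: "is_solution n Z A gam eta" "is_solution n Z A gam eta'"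
  shows "\<forall>k\<in>{1..2*n-1}. eta k = eta' k"
proof -
  define I where "I = {1..n}"
  define P where "P i j = pi_ij n Z eta gam i j" for i j
  define P' where "P' i j = pi_ij n Z eta' gam i j" for i j
  define D where "D i = eta i - eta' i" for i
  define E where "E j = beta_of n eta j - beta_of n eta' j" for j
  have PP': "P i j - P' i j = D i + E j" for i j
    unfolding P_def P'_def pi_ij_def D_def E_def alpha_of_def by simp
  have rows: "(\<Sum>j\<in>I - {i}. mu (P i j) - mu (P' i j)) = 0" if "i \<in> I" for i
    using is_solution_row_sum[OF sol(1)] is_solution_row_sum[OF sol(2)] that
    unfolding I_def P_def P'_def by (simp add: sum_subtractf)
  have cols: "E j * (\<Sum>i\<in>I - {j}. mu (P i j) - mu (P' i j)) = 0" if "j \<in> I" for j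
  proof (cases "j = n")
    case False
    then have "j \<in> {1..n-1}" using that unfolding I_def by auto
    then show ?thesis
      using is_solution_col_sum[OF sol(1)] is_solution_col_sum[OF sol(2)]
      unfolding I_def P_def P'_def by (simp add: sum_subtractf)
  qed (simp add: E_def beta_of_def)
  have "\<forall>i\<in>I. \<forall>j\<in>I - {i}. P i j = P' i j"
    by (rule offdiag_eq_of_mu_sums_eq[OF _ PP']) (use rows cols in \<open>auto simp only: I_def finite_atLeastAtMost\<close>)
  then have "D i + E j = 0" if "i \<in> I" "j \<in> I" "i \<noteq> j" for i j
    using that PP'[of i j] by force
  moreover have "E n = 0" by (simp add: E_def beta_of_def)
  ultimately have zero: "\<forall>i\<in>I. D i = 0 \<and> E i = 0"
    unfolding I_def using additive_offdiag_eq_0[OF n] by blast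
  show ?thesis
  proof
    fix k assume k: "k \<in> {1..2*n-1}"
    show "eta k = eta' k"
    proof (cases "k \<le> n")
      case True
      then show ?thesis using zero k unfolding I_def D_def by auto
    next
      case False
      then have "k - n \<in> I" "k - n \<noteq> n" using k unfolding I_def by auto
      then show ?thesis using zero False unfolding E_def beta_of_def by auto
    qed
  qed
qed

lemma abs_inner_le_card_infnorm: "\<bar>(x::real^'p) \<bullet> y\<bar> \<le> real CARD('p) * infnorm x * infnorm y"
proof -
  have "\<bar>x \<bullet> y\<bar> \<le> (\<Sum>i\<in>UNIV. \<bar>x $ i\<bar> * \<bar>y $ i\<bar>)"
    unfolding inner_vec_def by (rule order_trans[OF sum_abs]) (simp add: abs_mult)
  also have "\<dots> \<le> (\<Sum>i\<in>(UNIV::'p set). infnorm x * infnorm y)"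
    by (intro sum_mono mult_mono component_le_infnorm_cart) (auto simp: infnorm_pos_le)
  finally show ?thesis by simp
qed

lemma infnorm_le_z_max: "(i, j) \<in> offdiag n \<Longrightarrow> infnorm (Z i j) \<le> z_max n Z"
  unfolding z_max_def using finite_offdiag by (intro Max_ge) force+

lemma pi_ij_gamma_perturbation:
  fixes Z :: "nat \<Rightarrow> nat \<Rightarrow> real^'p"
  assumes ij: "(i, j) \<in> offdiag n" and gam: "infnorm (gam - gams) \<le> e2"
    and e2: "e2 * (real CARD('p) * z_max n Z) \<le> r"
  shows "\<bar>pi_ij n Z eta gam i j - pi_ij n Z eta gams i j\<bar> \<le> r"
proof -
  have "\<bar>pi_ij n Z eta gam i j - pi_ij n Z eta gams i j\<bar> = \<bar>Z i j \<bullet> (gam - gams)\<bar>"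
    unfolding pi_ij_def by (simp add: inner_diff_right)
  also have "\<dots> \<le> real CARD('p) * infnorm (Z i j) * infnorm (gam - gams)"
    by (rule abs_inner_le_card_infnorm)
  also have "\<dots> \<le> real CARD('p) * z_max n Z * e2"
  proof -
    have "0 \<le> z_max n Z" using infnorm_le_z_max[OF ij, of Z] infnorm_pos_le[of "Z i j"] by linarith
    then show ?thesis
      using infnorm_le_z_max[OF ij, of Z] gam by (intro mult_mono) (auto simp: infnorm_pos_le)
  qed
  finally show ?thesis using e2 by (simp add: mult_ac)
qed

lemma abs_sum_mu_diff_le:
  fixes a c :: "'a \<Rightarrow> real" and r :: real
  assumes "\<forall>s\<in>S. \<bar>a s - c s\<bar> \<le> r"
  shows "\<bar>\<Sum>s\<in>S. mu (a s) - mu (c s)\<bar> \<le> card S * r / 4"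
proof -
  have "\<bar>\<Sum>s\<in>S. mu (a s) - mu (c s)\<bar> \<le> (\<Sum>s\<in>S. r / 4)"
  proof (intro order_trans[OF sum_abs sum_mono])
    fix s assume "s \<in> S"
    then show "\<bar>mu (a s) - mu (c s)\<bar> \<le> r / 4"
      using assms mu_lipschitz[of "a s" "c s"] by fastforce
  qed
  then show ?thesis by simp
qed

lemma sqrt_ln_div_scale:
  assumes "0 < n" shows "real n * sqrt (ln (real n) / real n) = sqrt (real n * ln (real n))"
proof -
  have "real n * sqrt (ln (real n) / real n) = sqrt (real n) * (sqrt (real n) * sqrt (ln (real n) / real n))"
    using assms by (simp add: mult.assoc[symmetric])
  also have "sqrt (real n) * sqrt (ln (real n) / real n) = sqrt (ln (real n))"
    using assms by (simp add: real_sqrt_mult[symmetric])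
  finally show ?thesis by (simp add: real_sqrt_mult)
qed

text \<open>Observed degrees concentrate around those of the true parameter \<open>gams\<close>, and moving
  to \<open>gam\<close> changes each logit by at most \<open>sqrt (ln n / n)\<close>.\<close>
lemma line_residual_le:
  fixes Z :: "nat \<Rightarrow> nat \<Rightarrow> real^'p" and f g :: "nat \<Rightarrow> nat"
  assumes n: "2 \<le> n" and gam: "infnorm (gam - gams) \<le> e2"
    and e2: "e2 * (real CARD('p) * z_max n Z) \<le> sqrt (ln (real n) / real n)"
    and S: "card S \<le> n" "\<forall>k\<in>S. (f k, g k) \<in> offdiag n"
    and dev: "\<bar>(\<Sum>k\<in>S. of_bool (A (f k, g k))) - (\<Sum>k\<in>S. mu (pi_ij n Z etas gams (f k) (g k)))\<bar>
      < sqrt (real n * ln (real n))"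
  shows "\<bar>\<Sum>k\<in>S. mu (pi_ij n Z etas gam (f k) (g k)) - of_bool (A (f k, g k))\<bar>
    \<le> 5/4 * sqrt (real n * ln (real n))"
proof -
  have "\<bar>\<Sum>k\<in>S. mu (pi_ij n Z etas gam (f k) (g k)) - mu (pi_ij n Z etas gams (f k) (g k))\<bar>
      \<le> card S * sqrt (ln (real n) / real n) / 4"
    using S pi_ij_gamma_perturbation[OF _ gam e2] by (intro abs_sum_mu_diff_le) auto
  also have "\<dots> \<le> real n * sqrt (ln (real n) / real n) / 4"
    using S n by (intro divide_right_mono mult_right_mono) auto
  also have "\<dots> = sqrt (real n * ln (real n)) / 4" using n by (simp add: sqrt_ln_div_scale)
  finally have "\<bar>\<Sum>k\<in>S. mu (pi_ij n Z etas gam (f k) (g k)) - mu (pi_ij n Z etas gams (f k) (g k))\<bar>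
      \<le> sqrt (real n * ln (real n)) / 4" .
  moreover have "(\<Sum>k\<in>S. mu (pi_ij n Z etas gam (f k) (g k)) - of_bool (A (f k, g k)))
      = (\<Sum>k\<in>S. mu (pi_ij n Z etas gam (f k) (g k)) - mu (pi_ij n Z etas gams (f k) (g k)))
        - ((\<Sum>k\<in>S. of_bool (A (f k, g k))) - (\<Sum>k\<in>S. mu (pi_ij n Z etas gams (f k) (g k))))"
    by (simp add: sum_subtractf)
  ultimately show ?thesis using dev by linarith
qed

lemma degree_residuals_le:
  fixes Z :: "nat \<Rightarrow> nat \<Rightarrow> real^'p"
  assumes n: "2 \<le> n" and gam: "infnorm (gam - gams) \<le> e2"
    and e2: "e2 * (real CARD('p) * z_max n Z) \<le> sqrt (ln (real n) / real n)"
    and conc: "degrees_concentrated n (\<lambda>(i, j). mu (pi_ij n Z etas gams i j)) A"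
  shows "\<forall>i\<in>{1..n}. \<bar>\<Sum>j\<in>{1..n} - {i}. mu (pi_ij n Z etas gam i j) - of_bool (A (i, j))\<bar>
           \<le> 5/4 * sqrt (real n * ln (real n))"
    and "\<forall>j\<in>{1..n}. \<bar>\<Sum>i\<in>{1..n} - {j}. mu (pi_ij n Z etas gam i j) - of_bool (A (i, j))\<bar>
           \<le> 5/4 * sqrt (real n * ln (real n))"
  using conc line_residual_le[OF n gam e2, of "{1..n} - {_}" "\<lambda>_. _" id]
    line_residual_le[OF n gam e2, of "{1..n} - {_}" id "\<lambda>_. _"]
  unfolding degrees_concentrated_def outdeg_def indeg_def by (auto simp: offdiag_def)

lemma is_solution_of_shifts:
  fixes Z :: "nat \<Rightarrow> nat \<Rightarrow> real^'p"
  assumes c: "c n = 0"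
    and rows: "\<forall>i\<in>{1..n}. (\<Sum>j\<in>{1..n} - {i}. mu (pi_ij n Z etas gam i j + a i + c j) - of_bool (A (i, j))) = 0"
    and cols: "\<forall>j\<in>{1..n}. (\<Sum>i\<in>{1..n} - {j}. mu (pi_ij n Z etas gam i j + a i + c j) - of_bool (A (i, j))) = 0"
  shows "is_solution n Z A gam (\<lambda>k. etas k + (if k \<le> n then a k else c (k - n)))"
proof -
  define eta where "eta k = etas k + (if k \<le> n then a k else c (k - n))" for k
  have pi: "pi_ij n Z eta gam i j = pi_ij n Z etas gam i j + a i + c j" if "i \<in> {1..n}" "j \<in> {1..n}" for i j
    using that c unfolding pi_ij_def alpha_of_def beta_of_def eta_def by auto
  have "F_fun n Z A eta gam k = 0" if k: "k \<in> {1..2*n-1}" for k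
  proof (cases "k \<le> n")
    case True
    then show ?thesis using rows k pi unfolding F_fun_def outdeg_def by (simp add: sum_subtractf)
  next
    case False
    then have j: "k - n \<in> {1..n}" using k by auto
    then show ?thesis using cols[rule_format, OF j] False pi unfolding F_fun_def indeg_def by (simp add: sum_subtractf)
  qed
  then show ?thesis unfolding is_solution_def eta_def by blast
qed

lemma eta_dist_le:
  assumes "1 \<le> n" "\<forall>k\<in>{1..2*n-1}. \<bar>eta k - eta' k\<bar> \<le> r"
  shows "eta_dist n eta eta' \<le> r"
  using assms unfolding eta_dist_def by (subst Max_le_iff) auto

lemma exists_solution_near:
  fixes Z :: "nat \<Rightarrow> nat \<Rightarrow> real^'p"
  assumes n: "4 \<le> n" and gam: "infnorm (gam - gams) \<le> e2"
    and e2: "e2 * (real CARD('p) * z_max n Z) \<le> sqrt (ln (real n) / real n)"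
    and curv: "\<forall>(i, j)\<in>offdiag n. 1 / mu' (pi_ij n Z etas gam i j) \<le> b"
    and conc: "degrees_concentrated n (\<lambda>(i, j). mu (pi_ij n Z etas gams i j)) A"
    and t: "t < 1" "(4 * exp 2 * b + 1) * (5/4 * sqrt (real n * ln (real n))) < t / (exp 2 * b) * (real n - 1)"
  shows "\<exists>eta. is_solution n Z A gam eta \<and> eta_dist n eta etas \<le> 2 * t"
proof -
  interpret degree_equations n "pi_ij n Z etas gam" "\<lambda>i j. of_bool (A (i, j))" b
      "5/4 * sqrt (real n * ln (real n))" t
    using n curv degree_residuals_le[OF _ gam e2 conc] t by unfold_locales (auto simp: offdiag_def)
  obtain a c where c: "c n = 0" and ac: "\<forall>i\<in>I. \<bar>a i\<bar> \<le> 2 * t" "\<forall>j\<in>I. \<bar>c j\<bar> \<le> 2 * t"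
    and rows: "\<forall>i\<in>I. (\<Sum>j\<in>I - {i}. mu (pi_ij n Z etas gam i j + a i + c j) - of_bool (A (i, j))) = 0"
    and cols: "\<forall>j\<in>I. (\<Sum>i\<in>I - {j}. mu (pi_ij n Z etas gam i j + a i + c j) - of_bool (A (i, j))) = 0"
    using degree_equations_solvable by blast
  have "is_solution n Z A gam (\<lambda>k. etas k + (if k \<le> n then a k else c (k - n)))"
    using is_solution_of_shifts[OF c rows cols] .
  moreover have "eta_dist n (\<lambda>k. etas k + (if k \<le> n then a k else c (k - n))) etas \<le> 2 * t"
  proof (intro eta_dist_le ballI)
    fix k assume k: "k \<in> {1..2*n-1}"
    show "\<bar>etas k + (if k \<le> n then a k else c (k - n)) - etas k\<bar> \<le> 2 * t"
    proof (cases "k \<le> n")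
      case False
      then have "k - n \<in> I" using k by auto
      then show ?thesis using ac False by auto
    qed (use ac k in auto)
  qed (use n in simp)
  ultimately show ?thesis by blast
qed

lemma abs_pi_ij_le_near:
  fixes Z :: "nat \<Rightarrow> nat \<Rightarrow> real^'p"
  assumes e1: "0 \<le> e1" and eta: "\<forall>k \<in> {1..2*n-1}. \<bar>eta k - etas k\<bar> \<le> e1"
    and gam: "infnorm (gam - gams) \<le> e2" and ij: "(i, j) \<in> offdiag n"
  shows "\<bar>pi_ij n Z eta gam i j\<bar> \<le> 2 * (Max ((\<lambda>k. \<bar>etas k\<bar>) ` {1..2*n-1}) + e1)
           + real CARD('p) * \<bar>z_max n Z\<bar> * (infnorm gams + \<bar>e2\<bar>)"
proof -
  define R where "R = Max ((\<lambda>k. \<bar>etas k\<bar>) ` {1..2*n-1})"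
  have R: "\<bar>etas k\<bar> \<le> R" if "k \<in> {1..2*n-1}" for k
    unfolding R_def using that by (intro Max_ge) auto
  have coord: "\<bar>eta k\<bar> \<le> R + e1" if "k \<in> {1..2*n-1}" for k
    using eta R[OF that] that by fastforce
  have "i \<in> {1..2*n-1}" "j \<noteq> n \<Longrightarrow> n + j \<in> {1..2*n-1}" "1 \<in> {1..2*n-1}"
    using ij unfolding offdiag_def by auto
  moreover have "0 \<le> R" using R[OF calculation(3)] abs_ge_zero[of "etas 1"] by linarith
  ultimately have \<alpha>\<beta>: "\<bar>alpha_of eta i\<bar> \<le> R + e1" "\<bar>beta_of n eta j\<bar> \<le> R + e1"
    using coord e1 unfolding alpha_of_def beta_of_def by auto
  have "infnorm gam \<le> infnorm gams + \<bar>e2\<bar>"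
    using infnorm_triangle[of gams "gam - gams"] gam by simp
  moreover have "infnorm (Z i j) \<le> \<bar>z_max n Z\<bar>" using infnorm_le_z_max[OF ij, of Z] by linarith
  ultimately have "real CARD('p) * infnorm (Z i j) * infnorm gam
      \<le> real CARD('p) * \<bar>z_max n Z\<bar> * (infnorm gams + \<bar>e2\<bar>)"
    by (intro mult_mono) (auto simp: infnorm_pos_le)
  then have "\<bar>Z i j \<bullet> gam\<bar> \<le> real CARD('p) * \<bar>z_max n Z\<bar> * (infnorm gams + \<bar>e2\<bar>)"
    using abs_inner_le_card_infnorm[of "Z i j" gam] by linarith
  moreover have "\<bar>alpha_of eta i + beta_of n eta j + Z i j \<bullet> gam\<bar>
      \<le> \<bar>alpha_of eta i\<bar> + \<bar>beta_of n eta j\<bar> + \<bar>Z i j \<bullet> gam\<bar>"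
    by (rule order_trans[OF abs_triangle_ineq add_right_mono[OF abs_triangle_ineq]])
  ultimately show ?thesis using \<alpha>\<beta> unfolding pi_ij_def R_def[symmetric] by (smt (verit))
qed

lemma bdd_above_b_n_set:
  fixes Z :: "nat \<Rightarrow> nat \<Rightarrow> real^'p"
  assumes e1: "0 \<le> e1"
  shows "bdd_above {(1 + exp (pi_ij n Z eta gam i j))^2 / exp (pi_ij n Z eta gam i j) | eta gam i j.
            (\<forall>k \<in> {1..2*n-1}. \<bar>eta k - etas k\<bar> \<le> e1) \<and> infnorm (gam - gams) \<le> e2
            \<and> (i, j) \<in> offdiag n}"
proof -
  define M where "M = 2 * (Max ((\<lambda>k. \<bar>etas k\<bar>) ` {1..2*n-1}) + e1)
    + real CARD('p) * \<bar>z_max n Z\<bar> * (infnorm gams + \<bar>e2\<bar>)"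
  show ?thesis
  proof (rule bdd_aboveI[of _ "2 + 2 * exp M"])
    fix x assume "x \<in> {(1 + exp (pi_ij n Z eta gam i j))^2 / exp (pi_ij n Z eta gam i j) | eta gam i j.
            (\<forall>k \<in> {1..2*n-1}. \<bar>eta k - etas k\<bar> \<le> e1) \<and> infnorm (gam - gams) \<le> e2
            \<and> (i, j) \<in> offdiag n}"
    then obtain p where x: "x = exp (- p) + 2 + exp p" and p: "\<bar>p\<bar> \<le> M"
      using abs_pi_ij_le_near[OF e1] unfolding M_def inverse_mu'_eq_ratio[symmetric] inverse_mu'_eq by blast
    have "exp (- p) \<le> exp M" "exp p \<le> exp M" using p by auto
    then show "x \<le> 2 + 2 * exp M" unfolding x by linarith
  qed
qed

lemma inverse_mu'_le_b_n:
  fixes Z :: "nat \<Rightarrow> nat \<Rightarrow> real^'p"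
  assumes e1: "0 \<le> e1" and gam: "infnorm (gam - gams) \<le> e2" and ij: "(i, j) \<in> offdiag n"
  shows "1 / mu' (pi_ij n Z etas gam i j) \<le> b_n n Z etas gams e1 e2"
  unfolding b_n_def inverse_mu'_eq_ratio
proof (rule cSup_upper[OF _ bdd_above_b_n_set[OF e1]])
  show "(1 + exp (pi_ij n Z etas gam i j))^2 / exp (pi_ij n Z etas gam i j) \<in> {(1 + exp (pi_ij n Z eta gam i j))^2 / exp (pi_ij n Z eta gam i j) | eta gam i j.
            (\<forall>k \<in> {1..2*n-1}. \<bar>eta k - etas k\<bar> \<le> e1) \<and> infnorm (gam - gams) \<le> e2
            \<and> (i, j) \<in> offdiag n}"
  proof -
    have "\<forall>k \<in> {1..2*n-1}. \<bar>etas k - etas k\<bar> \<le> e1" using e1 by simp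
    then show ?thesis using gam ij by blast
  qed
qed

lemma shift_radius_le:
  assumes n: "4 \<le> n" and b: "4 \<le> b"
  shows "2 * (4 * exp 2 * b + 1) * (exp 2 * b) * (5/4 * sqrt (real n * ln (real n))) / (real n - 1)
           \<le> 25 * (exp 2)^2 * b^3 * sqrt (ln (real n) / real n)"
proof -
  define E where "E = exp (2::real)"
  define q where "q = sqrt (ln (real n) / real n)"
  have q: "0 \<le> q" unfolding q_def using n by simp
  have Eb: "1 \<le> E * b" unfolding E_def using b one_le_exp_iff[of 2] by (metis mult_mono order.trans one_le_numeral mult_1_left zero_le_one)
  have "sqrt (real n * ln (real n)) = real n * q"
    unfolding q_def using n by (simp add: sqrt_ln_div_scale)
  moreover have "real n - 1 \<noteq> 0" using n by simp
  ultimately have "2 * (4 * E * b + 1) * (E * b) * (5/4 * sqrt (real n * ln (real n))) / (real n - 1)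
      = 5/2 * ((4 * (E * b) + 1) * (E * b)) * (real n / (real n - 1)) * q"
    by (simp add: field_simps)
  also have "\<dots> \<le> 5/2 * (5 * (E * b)^2) * 2 * q"
  proof -
    have "E * b * 1 \<le> E * b * (E * b)" using Eb by (intro mult_left_mono) auto
    then have X: "5/2 * ((4 * (E * b) + 1) * (E * b)) \<le> 5/2 * (5 * (E * b)^2)"
      by (simp add: power2_eq_square algebra_simps)
    have r: "real n / (real n - 1) \<le> 2" "0 \<le> real n / (real n - 1)" using n by (auto simp: divide_le_eq)
    have "5/2 * ((4 * (E * b) + 1) * (E * b)) * (real n / (real n - 1)) \<le> 5/2 * (5 * (E * b)^2) * 2"
      using mult_mono[OF X r(1) _ r(2)] by simp
    then show ?thesis using q by (rule mult_right_mono)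
  qed
  also have "\<dots> = 25 * E^2 * (b^2 * q)" by (simp add: power_mult_distrib)
  also have "\<dots> \<le> 25 * E^2 * (b^3 * q)"
  proof -
    have "b^2 * 1 \<le> b^2 * b" using b by (intro mult_left_mono) auto
    then have "b^2 \<le> b^3" by (simp add: power2_eq_square power3_eq_cube)
    then show ?thesis using q by (intro mult_left_mono mult_right_mono) auto
  qed
  finally show ?thesis unfolding E_def q_def by (simp add: mult.assoc)
qed

lemma exists_shift_radius:
  assumes n: "4 \<le> n" and b: "4 \<le> b"
    and small: "b ^ 3 * sqrt (ln (real n) / real n) < 1 / (25 * (exp 2)^2)"
  shows "\<exists>t. t < 1
    \<and> (4 * exp 2 * b + 1) * (5/4 * sqrt (real n * ln (real n))) < t / (exp 2 * b) * (real n - 1)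
    \<and> 2 * t \<le> 50 * (exp 2)^2 * b ^ 3 * sqrt (ln (real n) / real n)"
proof (intro exI conjI)
  define \<delta> where "\<delta> = 5/4 * sqrt (real n * ln (real n))"
  define t where "t = 2 * (4 * exp 2 * b + 1) * (exp 2 * b) * \<delta> / (real n - 1)"
  have t_le: "t \<le> 25 * (exp 2)^2 * b^3 * sqrt (ln (real n) / real n)"
    using shift_radius_le[OF n b] unfolding t_def \<delta>_def .
  then show "t < 1" using small by (simp add: field_simps)
  show "2 * t \<le> 50 * (exp 2)^2 * b ^ 3 * sqrt (ln (real n) / real n)" using t_le by (simp add: mult_ac)
  have "0 < 4 * exp 2 * b + 1" using b by (simp add: add_pos_pos)
  then have "0 < (4 * exp 2 * b + 1) * \<delta>" using n unfolding \<delta>_def by (intro mult_pos_pos) auto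
  moreover have "t / (exp 2 * b) * (real n - 1) = 2 * ((4 * exp 2 * b + 1) * \<delta>)"
    using b n unfolding t_def by (simp add: field_simps)
  ultimately show "(4 * exp 2 * b + 1) * \<delta> < t / (exp 2 * b) * (real n - 1)" by linarith
qed

lemma prob_exists_solution_near:
  fixes Z :: "nat \<Rightarrow> nat \<Rightarrow> real^'p"
  assumes n: "4 \<le> n" and e1: "0 < e1" and gam: "infnorm (gam - gams) \<le> e2"
    and e2: "e2 * (real CARD('p) * z_max n Z) \<le> sqrt (ln (real n) / real n)"
    and small: "b_n n Z etas gams e1 e2 ^ 3 * sqrt (ln (real n) / real n) < 1 / (25 * (exp 2)^2)"
  shows "1 - (50 * (exp 2)^2 + 4) / real n
    \<le> measure_pmf.prob (adj_pmf n Z etas gams)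
         {A. \<exists>eta. is_solution n Z A gam eta \<and> eta_dist n eta etas
               \<le> (50 * (exp 2)^2 + 4) * b_n n Z etas gams e1 e2 ^ 3 * sqrt (ln (real n) / real n)}"
proof -
  define b where "b = b_n n Z etas gams e1 e2"
  define q where "q = sqrt (ln (real n) / real n)"
  define C :: real where "C = 50 * (exp 2)^2 + 4"
  have curv: "\<forall>(i, j)\<in>offdiag n. 1 / mu' (pi_ij n Z etas gam i j) \<le> b"
    using inverse_mu'_le_b_n[OF less_imp_le[OF e1] gam] unfolding b_def by auto
  have "(1, 2) \<in> offdiag n" using n by (simp add: offdiag_def)
  then have b: "4 \<le> b"
    using curv inverse_mu'_ge_4[of "pi_ij n Z etas gam 1 2"] by fastforce
  obtain t where t: "t < 1"
    "(4 * exp 2 * b + 1) * (5/4 * sqrt (real n * ln (real n))) < t / (exp 2 * b) * (real n - 1)"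
    and "2 * t \<le> 50 * (exp 2)^2 * b ^ 3 * q"
    using exists_shift_radius[OF n b small[folded b_def]] unfolding q_def by blast
  moreover have "50 * (exp 2)^2 * b ^ 3 * q \<le> C * b ^ 3 * q"
    using b n unfolding C_def q_def by (intro mult_right_mono) auto
  ultimately have radius: "2 * t \<le> C * b ^ 3 * q" by linarith
  have "{A. degrees_concentrated n (\<lambda>(i, j). mu (pi_ij n Z etas gams i j)) A}
      \<subseteq> {A. \<exists>eta. is_solution n Z A gam eta \<and> eta_dist n eta etas \<le> C * b ^ 3 * q}"
  proof
    fix A assume "A \<in> {A. degrees_concentrated n (\<lambda>(i, j). mu (pi_ij n Z etas gams i j)) A}"
    then obtain eta where "is_solution n Z A gam eta" "eta_dist n eta etas \<le> 2 * t"
      using exists_solution_near[OF n gam e2 curv _ t] by blast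
    then show "A \<in> {A. \<exists>eta. is_solution n Z A gam eta \<and> eta_dist n eta etas \<le> C * b ^ 3 * q}"
      using radius by auto
  qed
  then have "measure_pmf.prob (adj_pmf n Z etas gams) {A. degrees_concentrated n (\<lambda>(i, j). mu (pi_ij n Z etas gams i j)) A}
      \<le> measure_pmf.prob (adj_pmf n Z etas gams) {A. \<exists>eta. is_solution n Z A gam eta \<and> eta_dist n eta etas \<le> C * b ^ 3 * q}"
    by (rule measure_pmf.finite_measure_mono) simp
  moreover have "1 - 4 / real n \<le> measure_pmf.prob (adj_pmf n Z etas gams)
      {A. degrees_concentrated n (\<lambda>(i, j). mu (pi_ij n Z etas gams i j)) A}"
    using prob_degrees_concentrated[of n "\<lambda>(i, j). mu (pi_ij n Z etas gams i j)"] n mu_bounds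
    unfolding adj_pmf_def by (simp add: case_prod_unfold)
  moreover have "C / real n \<ge> 4 / real n" using n unfolding C_def by (simp add: divide_right_mono)
  ultimately show ?thesis unfolding C_def b_def q_def by linarith
qed

lemma cube_times_sqrt_ln_div_tendsto_0:
  fixes b :: "nat \<Rightarrow> real"
  assumes "b \<in> o(\<lambda>n. (real n / ln (real n)) powr (1/12))"
  shows "(\<lambda>n. b n ^ 3 * sqrt (ln (real n) / real n)) \<longlonglongrightarrow> 0"
proof -
  define f where "f n = (real n / ln (real n)) powr (1/12)" for n :: nat
  have ratio: "(\<lambda>n. b n / f n) \<longlonglongrightarrow> 0" using smalloD_tendsto[OF assms] unfolding f_def by simp
  have rate: "(\<lambda>n. f n ^ 3 * sqrt (ln (real n) / real n)) \<longlonglongrightarrow> 0" unfolding f_def by real_asymp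
  have "(\<lambda>n. (b n / f n) ^ 3 * (f n ^ 3 * sqrt (ln (real n) / real n))) \<longlonglongrightarrow> 0 ^ 3 * 0"
    by (intro tendsto_intros ratio rate)
  moreover have "\<forall>\<^sub>F n in sequentially.
      (b n / f n) ^ 3 * (f n ^ 3 * sqrt (ln (real n) / real n)) = b n ^ 3 * sqrt (ln (real n) / real n)"
    using eventually_ge_at_top[of "3::nat"]
  proof eventually_elim
    case (elim n)
    then have "f n \<noteq> 0" unfolding f_def by simp
    then show ?case by (simp add: power_divide)
  qed
  ultimately show ?thesis using Lim_transform_eventually[of _ _ sequentially] by fastforce
qed

theorem lemma1:
  fixes Z :: "nat \<Rightarrow> nat \<Rightarrow> nat \<Rightarrow> real^'p"
    and etas :: "nat \<Rightarrow> nat \<Rightarrow> real"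
    and gams :: "nat \<Rightarrow> real^'p"
    and gam :: "nat \<Rightarrow> real^'p"
    and eps1 eps2 :: "nat \<Rightarrow> real"
    and K :: "real set"
  assumes "compact K"
    and "\<forall>n i j k. (i, j) \<in> offdiag n \<longrightarrow> Z n i j $ k \<in> K"
    and "\<forall>n. eps1 n > 0" and "eps1 \<longlonglongrightarrow> 0"
    and "\<forall>n. eps2 n > 0"
    and "\<forall>n\<ge>2. eps2 n * (real CARD('p) * z_max n (Z n)) \<le> sqrt (ln (real n) / real n)"
    and "\<forall>n. infnorm (gam n - gams n) \<le> eps2 n"
    and "(\<lambda>n. b_n n (Z n) (etas n) (gams n) (eps1 n) (eps2 n))
           \<in> o(\<lambda>n. (real n / ln (real n)) powr (1/12))"
  shows "(\<exists>C>0. \<forall>\<^sub>F n in sequentially.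
            measure_pmf.prob (adj_pmf n (Z n) (etas n) (gams n))
              {A. \<exists>eta. is_solution n (Z n) A (gam n) eta \<and>
                   eta_dist n eta (etas n)
                     \<le> C * b_n n (Z n) (etas n) (gams n) (eps1 n) (eps2 n) ^ 3
                           * sqrt (ln (real n) / real n)}
            \<ge> 1 - C / real n)
       \<and> (\<lambda>n. b_n n (Z n) (etas n) (gams n) (eps1 n) (eps2 n) ^ 3 * sqrt (ln (real n) / real n))
            \<longlonglongrightarrow> 0
       \<and> (\<forall>\<^sub>F n in sequentially. \<forall>A eta eta'.
            is_solution n (Z n) A (gam n) eta \<and> is_solution n (Z n) A (gam n) eta'
            \<longrightarrow> (\<forall>k \<in> {1..2*n-1}. eta k = eta' k))"
proof -
  define rate where "rate n = b_n n (Z n) (etas n) (gams n) (eps1 n) (eps2 n) ^ 3 * sqrt (ln (real n) / real n)"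
    for n :: nat
  define C :: real where "C = 50 * (exp 2)^2 + 4"
  have rate: "rate \<longlonglongrightarrow> 0"
    unfolding rate_def by (rule cube_times_sqrt_ln_div_tendsto_0[OF assms(8)])
  have "\<forall>\<^sub>F n in sequentially. rate n < 1 / (25 * (exp 2)^2)"
    by (rule order_tendstoD(2)[OF rate]) simp
  then have "\<forall>\<^sub>F n in sequentially.
      1 - C / real n \<le> measure_pmf.prob (adj_pmf n (Z n) (etas n) (gams n))
        {A. \<exists>eta. is_solution n (Z n) A (gam n) eta \<and> eta_dist n eta (etas n) \<le> C * rate n}"
    using eventually_ge_at_top[of "4::nat"]
    by eventually_elim (use assms(3,6,7) in \<open>auto simp: C_def rate_def mult.assoc
        intro!: prob_exists_solution_near[unfolded mult.assoc]\<close>)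
  moreover have "\<forall>\<^sub>F n in sequentially. \<forall>A eta eta'.
      is_solution n (Z n) A (gam n) eta \<and> is_solution n (Z n) A (gam n) eta'
      \<longrightarrow> (\<forall>k \<in> {1..2*n-1}. eta k = eta' k)"
    using eventually_ge_at_top[of "3::nat"] by eventually_elim (use is_solution_unique in blast)
  moreover have "0 < C" unfolding C_def by (simp add: add_nonneg_pos)
  ultimately show ?thesis using rate unfolding rate_def by (auto simp: mult.assoc)
qed

end
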